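(* Let $E$ and $F$ be Banach lattices. The following assertions are equivalent: (1) Each positive Dunford–Pettis operator $T:E\to F$ is uaw-Dunford–Pettis. (2) Each positive compact operator $T:E\to F$ is uaw-Dunford–Pettis. (3) Either the norm of the dual Banach lattice $E'$ is order continuous, or $F=\{0\}$.
   Context: All operators are continuous linear operators. A net $(x_\alpha)$ in a Banach lattice $E$ is uaw-convergent to $x$ (written $x_\alpha\xrightarrow{uaw}x$) if $|x_\alpha-x|\wedge u\to 0$ weakly for every $u\in E_+$. An operator $T$ from a Banach lattice $E$ into a Banach space $X$ is uaw-Dunford–Pettis if for every norm bounded sequence $(x_n)$ in $E$ with $x_n\xrightarrow{uaw}0$ one has $\|Tx_n\|\to 0$. An operator between Banach spaces is Dunford–Pettis if it maps weakly null sequences to norm null sequences. *)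

theory Defs
  imports "HOL-Analysis.Analysis"
begin

definition labs :: "'a::{lattice, uminus} \<Rightarrow> 'a" where
  "labs x = sup x (- x)"

class banach_lattice = banach + ordered_real_vector + lattice +
  assumes lattice_norm: "sup x (- x) \<le> sup y (- y) \<Longrightarrow> norm x \<le> norm y"

definition dual_le :: "('a::banach_lattice \<Rightarrow>\<^sub>L real) \<Rightarrow> ('a \<Rightarrow>\<^sub>L real) \<Rightarrow> bool" where
  "dual_le f g \<longleftrightarrow> (\<forall>x. 0 \<le> x \<longrightarrow> blinfun_apply f x \<le> blinfun_apply g x)"

definition dual_order_continuous :: "'a::banach_lattice itself \<Rightarrow> bool" where
  "dual_order_continuous _ \<longleftrightarrow>
     (\<forall>D :: ('a \<Rightarrow>\<^sub>L real) set.
        D \<noteq> {}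
        \<and> (\<forall>f\<in>D. \<forall>g\<in>D. \<exists>h\<in>D. dual_le h f \<and> dual_le h g)
        \<and> (\<forall>f\<in>D. dual_le 0 f)
        \<and> (\<forall>h. (\<forall>f\<in>D. dual_le h f) \<longrightarrow> dual_le h 0)
        \<longrightarrow> (INF f\<in>D. norm f) = 0)"

definition weakly_null :: "(nat \<Rightarrow> 'a::real_normed_vector) \<Rightarrow> bool" where
  "weakly_null x \<longleftrightarrow> (\<forall>f :: 'a \<Rightarrow>\<^sub>L real. (\<lambda>n. blinfun_apply f (x n)) \<longlonglongrightarrow> 0)"

definition uaw_null :: "(nat \<Rightarrow> 'a::banach_lattice) \<Rightarrow> bool" where
  "uaw_null x \<longleftrightarrow> (\<forall>u. 0 \<le> u \<longrightarrow> weakly_null (\<lambda>n. inf (labs (x n)) u))"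

definition positive_op :: "('a::banach_lattice \<Rightarrow> 'b::banach_lattice) \<Rightarrow> bool" where
  "positive_op T \<longleftrightarrow> (\<forall>x. 0 \<le> x \<longrightarrow> 0 \<le> T x)"

definition dunford_pettis_op :: "('a::real_normed_vector \<Rightarrow> 'b::real_normed_vector) \<Rightarrow> bool" where
  "dunford_pettis_op T \<longleftrightarrow> bounded_linear T \<and>
     (\<forall>x. weakly_null x \<longrightarrow> (\<lambda>n. T (x n)) \<longlonglongrightarrow> 0)"

definition compact_op :: "('a::real_normed_vector \<Rightarrow> 'b::real_normed_vector) \<Rightarrow> bool" where
  "compact_op T \<longleftrightarrow> bounded_linear T \<and> compact (closure (T ` ball 0 1))"

definition uaw_dunford_pettis_op :: "('a::banach_lattice \<Rightarrow> 'b::real_normed_vector) \<Rightarrow> bool" where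
  "uaw_dunford_pettis_op T \<longleftrightarrow> bounded_linear T \<and>
     (\<forall>x. bounded (range x) \<and> uaw_null x \<longrightarrow> (\<lambda>n. T (x n)) \<longlonglongrightarrow> 0)"

end

theory Submission
  imports Defs "HOL-Library.Lattice_Algebras"
begin

subclass (in banach_lattice) lattice_ab_group_add ..

lemma (in lattice_ab_group_add) inf_sup_distrib_group:
  "inf a (sup b c) = sup (inf a b) (inf a c)"
proof (rule order.antisym)
  show "sup (inf a b) (inf a c) \<le> inf a (sup b c)"
    by (simp add: inf.coboundedI2 le_infI1)
  have inf_eq: "inf x y = x + y - sup x y" for x y
    using add_eq_inf_sup[of x y] by (metis add_diff_cancel_left' add.commute)
  have "a + b - sup a (sup b c) \<le> a + b - sup a b"
    by (intro diff_left_mono sup_mono) simp_all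
  moreover have "a + c - sup a (sup b c) \<le> a + c - sup a c"
    by (intro diff_left_mono sup_mono) simp_all
  ultimately have "sup (a + b - sup a (sup b c)) (a + c - sup a (sup b c)) \<le> sup (inf a b) (inf a c)"
    unfolding inf_eq[of a b] inf_eq[of a c] by (rule sup.mono)
  moreover have "sup (a + b - sup a (sup b c)) (a + c - sup a (sup b c)) = a + sup b c - sup a (sup b c)"
    by (simp only: diff_conv_add_uminus add_sup_distrib_right add_sup_distrib_left add.assoc)
  ultimately show "inf a (sup b c) \<le> sup (inf a b) (inf a c)"
    by (simp only: inf_eq[of a "sup b c"])
qed

subclass (in lattice_ab_group_add) distrib_lattice
proof
  fix x y z
  have "sup x (inf y z) = sup (sup x (inf x z)) (inf y z)" by simp
  also have "\<dots> = sup x (sup (inf z x) (inf z y))" by (metis sup_assoc inf_commute)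
  also have "\<dots> = sup (inf (sup x y) x) (inf (sup x y) z)"
    by (simp add: inf_sup_distrib_group inf_commute)
  also have "\<dots> = inf (sup x y) (sup x z)" by (simp add: inf_sup_distrib_group)
  finally show "sup x (inf y z) = inf (sup x y) (sup x z)" .
qed

lemma labs_ge_self: "x \<le> labs (x::'a::lattice_ab_group_add)" and minus_le_labs: "- x \<le> labs (x::'a::lattice_ab_group_add)"
  by (simp_all add: labs_def)

lemma labs_le_iff: "labs (x::'a::lattice_ab_group_add) \<le> y \<longleftrightarrow> x \<le> y \<and> - x \<le> y"
  by (simp add: labs_def)

lemma labs_nonneg: "0 \<le> labs (x::'a::lattice_ab_group_add)"
proof -
  have "x + - x \<le> labs x + labs x" by (intro add_mono labs_ge_self minus_le_labs)
  then show ?thesis by simp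
qed

lemma labs_of_nonneg: "0 \<le> (x::'a::lattice_ab_group_add) \<Longrightarrow> labs x = x"
  unfolding labs_def by (rule sup_absorb1) (meson neg_le_0_iff_le order_trans)

lemma labs_minus: "labs (- x) = labs (x::'a::lattice_ab_group_add)"
  by (simp add: labs_def sup_commute)

lemma labs_eq_pprt_minus_nprt: "labs (x::'a::lattice_ab_group_add) = pprt x - nprt x"
proof -
  have "sup (sup x (- x)) 0 = sup x (- x)"
    using labs_nonneg[of x] unfolding labs_def by (rule sup_absorb1)
  then show ?thesis
    by (simp add: add_sup_inf_distribs ac_simps pprt_def nprt_def labs_def)
qed

lemma pprt_le_labs: "pprt x \<le> labs (x::'a::lattice_ab_group_add)"
  using labs_nonneg[of x] by (simp add: pprt_def labs_def)

lemma minus_nprt_le_labs: "- nprt x \<le> labs (x::'a::lattice_ab_group_add)"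
  by (simp add: labs_eq_pprt_minus_nprt)

lemma nprt_diff_le_labs: "labs (nprt a - nprt b) \<le> labs (a - (b::'a::lattice_ab_group_add))"
proof -
  have *: "nprt x - nprt y \<le> labs (x - y)" for x y :: 'a
  proof -
    have "x \<le> y + labs (x - y)" using labs_ge_self[of "x - y"] by (simp add: algebra_simps)
    then have "inf x 0 \<le> inf (y + labs (x - y)) (labs (x - y))"
      using labs_nonneg by (intro inf_mono) simp_all
    also have "\<dots> = inf y 0 + labs (x - y)" by (simp add: add_inf_distrib_right)
    finally show ?thesis
      unfolding nprt_def diff_le_eq by (simp only: add.commute)
  qed
  show ?thesis
    using *[of a b] *[of b a] labs_minus[of "a - b"] by (simp add: labs_le_iff)
qed

lemma inf_add_le_add_inf:
  fixes a b c :: "'a::lattice_ab_group_add"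
  assumes "0 \<le> a" "0 \<le> b" "0 \<le> c"
  shows "inf (a + b) c \<le> inf a c + inf b c"
proof -
  have "inf (a + b) c \<le> inf (a + b) (a + c)" and "inf (a + b) c \<le> c + inf b c"
    using assms by (simp_all add: le_infI2 add_increasing add_increasing2)
  then show ?thesis
    by (simp add: add_inf_distrib_left add_inf_distrib_right)
qed

lemma inf_add_nonneg_le: "0 \<le> (b::'a::lattice_ab_group_add) \<Longrightarrow> inf x (a + b) \<le> inf x a + b"
  by (simp add: add_inf_distrib_right le_infI1 le_infI2 add_increasing2)

lemma diff_inf_eq_pprt: "(x::'a::lattice_ab_group_add) - inf x w = pprt (x - w)"
  by (simp add: diff_inf_eq_sup pprt_def add_sup_distrib_left sup_commute)

lemma inf_pprt_pprt: "inf (pprt p) (pprt q) = pprt (inf p (q::'a::lattice_ab_group_add))"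
  by (simp add: pprt_def sup_inf_distrib2)

lemma inf_sum_eq_0:
  fixes w :: "'i \<Rightarrow> 'a::lattice_ab_group_add"
  assumes "\<And>i. i \<in> I \<Longrightarrow> 0 \<le> w i" "\<And>i. i \<in> I \<Longrightarrow> inf (w i) v = 0" "0 \<le> v"
  shows "inf (sum w I) v = 0"
  using assms
proof (induction I rule: infinite_finite_induct)
  case (insert i I)
  have "inf (w i + sum w I) v \<le> inf (w i) v + inf (sum w I) v"
    using insert.prems by (intro inf_add_le_add_inf sum_nonneg) auto
  then have "inf (w i + sum w I) v \<le> 0"
    using insert by simp
  moreover have "0 \<le> inf (w i + sum w I) v"
    using insert.prems by (simp add: sum_nonneg)
  ultimately show ?case
    using insert.hyps by (simp add: order.antisym)
qed (simp_all add: inf_absorb1)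

lemma sum_disjoint_le:
  fixes w :: "'i \<Rightarrow> 'a::lattice_ab_group_add"
  assumes nonneg: "\<And>i. 0 \<le> w i" and disjoint: "\<And>i j. i \<noteq> j \<Longrightarrow> inf (w i) (w j) = 0"
    and le: "\<And>i. w i \<le> u"
  shows "sum w I \<le> u"
proof (induction I rule: infinite_finite_induct)
  case (insert i I)
  have "inf (sum w I) (w i) = 0"
    using insert.hyps by (intro inf_sum_eq_0 nonneg disjoint) auto
  then have "sum w (insert i I) = sup (sum w I) (w i)"
    using insert.hyps add_eq_inf_sup[of "sum w I" "w i"] by (simp add: add.commute)
  then show ?case using insert.IH le by simp
qed (simp_all add: order.trans[OF nonneg le])

lemma scaleR_sup_nonneg:
  fixes a b :: "'a::banach_lattice"
  assumes "0 \<le> c"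
  shows "c *\<^sub>R sup a b = sup (c *\<^sub>R a) (c *\<^sub>R b)"
proof (cases "c = 0")
  case False
  with assms have c: "0 < c" by simp
  have "x \<le> (1/c) *\<^sub>R sup (c *\<^sub>R a) (c *\<^sub>R b)" if "x \<in> {a, b}" for x
  proof -
    have "(1/c) *\<^sub>R (c *\<^sub>R x) \<le> (1/c) *\<^sub>R sup (c *\<^sub>R a) (c *\<^sub>R b)"
      using c that by (intro scaleR_left_mono) auto
    then show ?thesis using c by simp
  qed
  then have "c *\<^sub>R sup a b \<le> c *\<^sub>R ((1/c) *\<^sub>R sup (c *\<^sub>R a) (c *\<^sub>R b))"
    using assms by (intro scaleR_left_mono sup_least) simp_all
  moreover have "sup (c *\<^sub>R a) (c *\<^sub>R b) \<le> c *\<^sub>R sup a b"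
    using assms by (intro sup_least scaleR_left_mono) simp_all
  ultimately show ?thesis using c by (simp add: order.antisym)
qed simp

lemma scaleR_inf_nonneg:
  fixes a b :: "'a::banach_lattice"
  assumes "0 \<le> c"
  shows "c *\<^sub>R inf a b = inf (c *\<^sub>R a) (c *\<^sub>R b)"
  using scaleR_sup_nonneg[OF assms, of "- a" "- b"]
  by (simp only: inf_eq_neg_sup[of a] inf_eq_neg_sup[of "c *\<^sub>R a"] scaleR_minus_right)

lemma norm_labs: "norm (labs x) = norm (x::'a::banach_lattice)"
proof -
  have "sup (labs x) (- labs x) = sup x (- x)"
    by (metis labs_of_nonneg labs_nonneg labs_def)
  then show ?thesis
    by (metis lattice_norm order_refl antisym)
qed

lemma norm_mono_nonneg:
  fixes x y :: "'a::banach_lattice"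
  assumes "0 \<le> x" "x \<le> y"
  shows "norm x \<le> norm y"
  using assms labs_of_nonneg[of x] labs_of_nonneg[of y]
  by (intro lattice_norm) (simp add: labs_def[symmetric])

lemma closed_lattice_atLeast: "closed {a::'a::banach_lattice..}"
  unfolding closed_sequential_limits
proof (intro allI impI)
  fix x :: "nat \<Rightarrow> 'a" and l
  assume "(\<forall>n. x n \<in> {a..}) \<and> x \<longlonglongrightarrow> l"
  then have ge: "\<And>n. nprt (x n - a) = 0" and lim: "(\<lambda>n. norm (x n - l)) \<longlonglongrightarrow> 0"
    by (auto simp: LIM_zero_iff tendsto_norm_zero)
  have "norm (nprt (l - a)) \<le> norm (x n - l)" for n
    using lattice_norm[OF nprt_diff_le_labs[of "x n - a" "l - a", unfolded labs_def]] ge[of n]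
    by simp
  then have "norm (nprt (l - a)) \<le> 0"
    using lim by (intro tendsto_lowerbound[OF lim]) auto
  then show "l \<in> {a..}"
    by (simp add: zero_le_iff_zero_nprt[symmetric])
qed

lemma suminf_ge_term:
  fixes f :: "nat \<Rightarrow> 'a::banach_lattice"
  assumes "summable f" "\<And>n. 0 \<le> f n"
  shows "f m \<le> suminf f"
proof -
  have "eventually (\<lambda>n. sum f {..<n} \<in> {f m..}) sequentially"
    using eventually_gt_at_top[of m]
  proof eventually_elim
    case (elim n)
    then have "sum f {..<n} = f m + sum f ({..<n} - {m})"
      by (simp add: sum.remove)
    then show ?case using assms(2) by (simp add: sum_nonneg)
  qed
  then show ?thesis
    using Lim_in_closed_set[OF closed_lattice_atLeast _ _ summable_LIMSEQ[OF assms(1)]] by simp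
qed

lemma pos_functional_nonneg: "dual_le 0 f \<Longrightarrow> 0 \<le> x \<Longrightarrow> 0 \<le> blinfun_apply f x"
  by (simp add: dual_le_def)

lemma pos_functional_mono:
  assumes "dual_le 0 f" "x \<le> y"
  shows "blinfun_apply f x \<le> blinfun_apply f y"
  using pos_functional_nonneg[OF assms(1), of "y - x"] assms(2) by (simp add: blinfun.diff_right)

lemma pos_functional_abs_le:
  assumes "dual_le 0 f"
  shows "\<bar>blinfun_apply f x\<bar> \<le> blinfun_apply f (labs x)"
proof -
  have "blinfun_apply f x = blinfun_apply f (pprt x) + blinfun_apply f (nprt x)"
    by (metis prts blinfun.add_right)
  moreover have "blinfun_apply f (labs x) = blinfun_apply f (pprt x) - blinfun_apply f (nprt x)"
    by (simp add: labs_eq_pprt_minus_nprt blinfun.diff_right)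
  moreover have "0 \<le> blinfun_apply f (pprt x)" "0 \<le> - blinfun_apply f (nprt x)"
    using pos_functional_nonneg[OF assms, of "pprt x"] pos_functional_nonneg[OF assms, of "- nprt x"]
    by (simp_all add: blinfun.minus_right)
  ultimately show ?thesis by linarith
qed

lemma pos_functional_norm_approx:
  fixes f :: "'a::banach_lattice \<Rightarrow>\<^sub>L real"
  assumes f: "dual_le 0 f" and r: "r < norm f"
  obtains x where "0 \<le> x" "norm x \<le> 1" "r < blinfun_apply f x"
proof -
  have "\<exists>x. 0 \<le> x \<and> norm x \<le> 1 \<and> r < blinfun_apply f x"
  proof (rule ccontr)
    assume "\<not> ?thesis"
    then have le_r: "blinfun_apply f x \<le> r" if "0 \<le> x" "norm x \<le> 1" for x
      using that by (meson not_le)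
    then have r0: "0 \<le> r" by fastforce
    have "\<bar>blinfun_apply f x\<bar> \<le> r * norm x" for x
    proof (cases "x = 0")
      case False
      have "blinfun_apply f ((1 / norm x) *\<^sub>R labs x) \<le> r"
        using False by (intro le_r scaleR_nonneg_nonneg labs_nonneg) (simp_all add: norm_labs)
      then have "blinfun_apply f (labs x) \<le> r * norm x"
        using False by (simp add: blinfun.scaleR_right field_simps)
      then show ?thesis using pos_functional_abs_le[OF f, of x] by simp
    qed simp
    then have "norm f \<le> r"
      using r0 by (intro norm_blinfun_bound) auto
    then show False using r by simp
  qed
  then show ?thesis using that by blast
qed

definition cone_linear :: "('a::ordered_real_vector \<Rightarrow> real) \<Rightarrow> bool" where
  "cone_linear G \<longleftrightarrow> (\<forall>a b. 0 \<le> a \<longrightarrow> 0 \<le> b \<longrightarrow> G (a + b) = G a + G b)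
     \<and> (\<forall>c a. 0 \<le> c \<longrightarrow> 0 \<le> a \<longrightarrow> G (c *\<^sub>R a) = c * G a)"

text \<open>Subhomogeneity suffices: applying it to \<open>c\<close> and to \<open>1/c\<close> gives equality.\<close>

lemma cone_linearI:
  assumes add: "\<And>a b. 0 \<le> a \<Longrightarrow> 0 \<le> b \<Longrightarrow> G (a + b) = G a + G b"
    and subhom: "\<And>c a. 0 < c \<Longrightarrow> 0 \<le> a \<Longrightarrow> G (c *\<^sub>R a) \<le> c * G a"
  shows "cone_linear G"
  unfolding cone_linear_def
proof (intro conjI allI impI add)
  fix c :: real and a :: 'a assume c: "0 \<le> c" and a: "0 \<le> a"
  show "G (c *\<^sub>R a) = c * G a"
  proof (cases "c = 0")
    case True
    then show ?thesis using add[of 0 0] by simp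
  next
    case False
    with c have "0 < c" by simp
    then have "G ((1/c) *\<^sub>R (c *\<^sub>R a)) \<le> (1/c) * G (c *\<^sub>R a)"
      using a by (intro subhom scaleR_nonneg_nonneg) simp_all
    then have "c * G a \<le> G (c *\<^sub>R a)"
      using \<open>0 < c\<close> by (simp add: field_simps)
    then show ?thesis using subhom[OF \<open>0 < c\<close> a] by simp
  qed
qed

lemma cone_linear_add: "cone_linear G \<Longrightarrow> 0 \<le> a \<Longrightarrow> 0 \<le> b \<Longrightarrow> G (a + b) = G a + G b"
  and cone_linear_scaleR: "cone_linear G \<Longrightarrow> 0 \<le> c \<Longrightarrow> 0 \<le> a \<Longrightarrow> G (c *\<^sub>R a) = c * G a"
  by (simp_all add: cone_linear_def)

lemma cone_linear_diff_eq:
  assumes "cone_linear G" "0 \<le> a" "0 \<le> b" "0 \<le> a'" "0 \<le> b'" "a - b = a' - b'"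
  shows "G a - G b = G a' - G b'"
proof -
  have "a + b' = a' + b" using assms(6) by (simp add: algebra_simps)
  then have "G a + G b' = G a' + G b"
    using assms(1-5) by (metis cone_linear_add)
  then show ?thesis by simp
qed

text \<open>Every element is the difference of its positive parts \<open>pprt x\<close> and \<open>- nprt x\<close>.\<close>

lemma pos_functional_of_cone_linear:
  fixes G :: "'a::banach_lattice \<Rightarrow> real"
  assumes G: "cone_linear G" and bound: "\<And>a. 0 \<le> a \<Longrightarrow> 0 \<le> G a \<and> G a \<le> K * norm a"
  obtains g where "dual_le 0 g" "\<And>a. 0 \<le> a \<Longrightarrow> blinfun_apply g a = G a"
proof -
  define h where "h x = G (pprt x) - G (- nprt x)" for x
  have decomp: "pprt x - - nprt x = x" for x :: 'a
    by (simp add: prts[symmetric])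
  have h_eq: "h x = G a - G b" if "0 \<le> a" "0 \<le> b" "x = a - b" for x a b
    unfolding h_def using that decomp[of x] by (intro cone_linear_diff_eq[OF G]) simp_all
  have "h (x + y) = h x + h y" for x y
  proof -
    have "x + y = (pprt x + pprt y) - (- nprt x + - nprt y)"
      by (simp only: add_diff_add decomp)
    then have "h (x + y) = G (pprt x + pprt y) - G (- nprt x + - nprt y)"
      by (intro h_eq add_nonneg_nonneg) simp_all
    then show ?thesis
      using cone_linear_add[OF G, of "pprt x" "pprt y"] cone_linear_add[OF G, of "- nprt x" "- nprt y"]
      by (simp add: h_def)
  qed
  moreover have "h (c *\<^sub>R x) = c *\<^sub>R h x" for c x
  proof (cases "0 \<le> c")
    case True
    have "c *\<^sub>R x = c *\<^sub>R pprt x - c *\<^sub>R - nprt x"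
      by (simp only: scaleR_right_diff_distrib[symmetric] decomp)
    then have "h (c *\<^sub>R x) = G (c *\<^sub>R pprt x) - G (c *\<^sub>R - nprt x)"
      using True by (intro h_eq scaleR_nonneg_nonneg) simp_all
    then show ?thesis
      using True cone_linear_scaleR[OF G True, of "pprt x"] cone_linear_scaleR[OF G True, of "- nprt x"]
      by (simp add: h_def algebra_simps)
  next
    case False
    have "(- c) *\<^sub>R - nprt x - (- c) *\<^sub>R pprt x = c *\<^sub>R (pprt x - - nprt x)"
      by (simp add: algebra_simps)
    then have "c *\<^sub>R x = (- c) *\<^sub>R - nprt x - (- c) *\<^sub>R pprt x"
      by (simp only: decomp)
    then have "h (c *\<^sub>R x) = G ((- c) *\<^sub>R - nprt x) - G ((- c) *\<^sub>R pprt x)"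
      using False by (intro h_eq scaleR_nonneg_nonneg) simp_all
    moreover have "0 \<le> - c" using False by simp
    ultimately show ?thesis
      using cone_linear_scaleR[OF G, of "- c" "pprt x"] cone_linear_scaleR[OF G, of "- c" "- nprt x"]
      by (simp add: h_def algebra_simps)
  qed
  moreover have "norm (h x) \<le> norm x * \<bar>K\<bar>" for x
  proof -
    have "G a \<le> \<bar>K\<bar> * norm x" if "0 \<le> a" "a \<le> labs x" for a
    proof -
      have "K * norm a \<le> \<bar>K\<bar> * norm x"
        using norm_mono_nonneg[OF that] norm_labs[of x]
        by (metis abs_ge_self abs_ge_zero mult_mono norm_ge_zero order_trans)
      then show ?thesis using bound[OF that(1)] by simp
    qed
    then have "G (pprt x) \<le> \<bar>K\<bar> * norm x" "G (- nprt x) \<le> \<bar>K\<bar> * norm x"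
      by (simp_all add: pprt_le_labs minus_nprt_le_labs)
    moreover have "0 \<le> G (pprt x)" "0 \<le> G (- nprt x)"
      using bound[of "pprt x"] bound[of "- nprt x"] by simp_all
    ultimately show ?thesis by (simp add: h_def abs_le_iff mult.commute)
  qed
  ultimately have "bounded_linear h"
    by (rule bounded_linear_intro)
  moreover have "h a = G a" if "0 \<le> a" for a
    using h_eq[OF that order_refl, of a] cone_linear_scaleR[OF G, of 0 0] by simp
  ultimately show ?thesis
    using that[of "Blinfun h"] bound by (simp add: bounded_linear_Blinfun_apply dual_le_def)
qed

lemma cone_linear_SUP_interval:
  fixes g :: "'a::banach_lattice \<Rightarrow>\<^sub>L real"
  defines "G \<equiv> \<lambda>a. SUP b\<in>{0..a}. blinfun_apply g b"
  shows "cone_linear G"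
    and "\<And>a. 0 \<le> a \<Longrightarrow> blinfun_apply g a \<le> G a"
    and "\<And>a. 0 \<le> a \<Longrightarrow> 0 \<le> G a \<and> G a \<le> norm g * norm a"
proof -
  have bound: "blinfun_apply g b \<le> norm g * norm a" if "b \<in> {0..a}" for a b
  proof -
    have "blinfun_apply g b \<le> norm g * norm b"
      using norm_blinfun[of g b] by simp
    also have "\<dots> \<le> norm g * norm a"
      using that by (intro mult_left_mono norm_mono_nonneg) auto
    finally show ?thesis .
  qed
  have upper: "blinfun_apply g b \<le> G a" if "b \<in> {0..a}" for a b
    unfolding G_def using that bound by (intro cSUP_upper bdd_aboveI2) auto
  have least: "G a \<le> c" if "0 \<le> a" "\<And>b. b \<in> {0..a} \<Longrightarrow> blinfun_apply g b \<le> c" for a c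
    unfolding G_def using that by (intro cSUP_least) auto
  show "blinfun_apply g a \<le> G a" if "0 \<le> a" for a
    using that by (intro upper) simp
  show "0 \<le> G a \<and> G a \<le> norm g * norm a" if "0 \<le> a" for a
    using that upper[of 0 a] bound by (auto intro: least)
  show "cone_linear G"
  proof (rule cone_linearI)
    fix a1 a2 :: 'a assume a1: "0 \<le> a1" and a2: "0 \<le> a2"
    show "G (a1 + a2) = G a1 + G a2"
    proof (rule order.antisym)
      show "G (a1 + a2) \<le> G a1 + G a2"
      proof (rule least)
        fix b assume b: "b \<in> {0..a1 + a2}"
        text \<open>Riesz decomposition: \<open>b = inf b a1 + pprt (b - a1)\<close> with \<open>pprt (b - a1) \<le> a2\<close>.\<close>
        have "pprt (b - a1) \<le> a2"
          using b a2 by (simp add: pprt_def diff_le_eq add.commute)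
        then have "inf b a1 \<in> {0..a1}" "b - inf b a1 \<in> {0..a2}"
          using b a1 by (simp_all only: diff_inf_eq_pprt) simp_all
        then have "blinfun_apply g (inf b a1) + blinfun_apply g (b - inf b a1) \<le> G a1 + G a2"
          by (intro add_mono upper)
        then show "blinfun_apply g b \<le> G a1 + G a2"
          by (simp only: blinfun.diff_right add_diff_cancel)
      qed (use a1 a2 in simp)
      have "G a1 \<le> G (a1 + a2) - blinfun_apply g b2" if b2: "b2 \<in> {0..a2}" for b2
      proof (rule least[OF a1])
        fix b1 assume "b1 \<in> {0..a1}"
        then have "blinfun_apply g (b1 + b2) \<le> G (a1 + a2)"
          using b2 by (intro upper) (auto intro: add_mono)
        then show "blinfun_apply g b1 \<le> G (a1 + a2) - blinfun_apply g b2"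
          by (simp add: blinfun.add_right)
      qed
      then have "G a2 \<le> G (a1 + a2) - G a1"
        by (intro least[OF a2]) (simp add: algebra_simps)
      then show "G a1 + G a2 \<le> G (a1 + a2)" by simp
    qed
  next
    fix c :: real and a :: 'a assume c: "0 < c" and a: "0 \<le> a"
    show "G (c *\<^sub>R a) \<le> c * G a"
    proof (rule least)
      fix b assume b: "b \<in> {0..c *\<^sub>R a}"
      then have "(1/c) *\<^sub>R b \<in> {0..a}"
        using c scaleR_left_mono[of b "c *\<^sub>R a" "1/c"] by (auto intro: scaleR_nonneg_nonneg)
      then have "(1/c) * blinfun_apply g b \<le> G a"
        using upper[of "(1/c) *\<^sub>R b" a] by (simp add: blinfun.scaleR_right)
      then show "blinfun_apply g b \<le> c * G a"
        using c by (simp add: field_simps)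
    qed (use c a in \<open>simp add: scaleR_nonneg_nonneg\<close>)
  qed
qed

lemma pos_functional_decomposition:
  fixes g :: "'a::banach_lattice \<Rightarrow>\<^sub>L real"
  obtains p q where "dual_le 0 p" "dual_le 0 q" "g = p - q"
proof -
  note G = cone_linear_SUP_interval[where g=g]
  obtain p where p: "dual_le 0 p" and p_eq: "\<And>a. 0 \<le> a \<Longrightarrow> blinfun_apply p a = (SUP b\<in>{0..a}. blinfun_apply g b)"
    using pos_functional_of_cone_linear[OF G(1) G(3)] by blast
  have "dual_le 0 (p - g)"
    using G(2) by (simp add: dual_le_def blinfun.diff_left p_eq)
  with p show ?thesis using that[of p "p - g"] by simp
qed

lemma weakly_nullI_pos_functional:
  fixes x :: "nat \<Rightarrow> 'a::banach_lattice"
  assumes "\<And>p. dual_le 0 p \<Longrightarrow> (\<lambda>n. blinfun_apply p (x n)) \<longlonglongrightarrow> 0"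
  shows "weakly_null x"
  unfolding weakly_null_def
proof
  fix g :: "'a \<Rightarrow>\<^sub>L real"
  obtain p q where "dual_le 0 p" "dual_le 0 q" "g = p - q"
    by (rule pos_functional_decomposition)
  then show "(\<lambda>n. blinfun_apply g (x n)) \<longlonglongrightarrow> 0"
    using tendsto_diff[OF assms assms] by (simp add: blinfun.diff_left)
qed

definition dual_decreasing_to_0 :: "('a::banach_lattice \<Rightarrow>\<^sub>L real) set \<Rightarrow> bool" where
  "dual_decreasing_to_0 D \<longleftrightarrow> D \<noteq> {}
     \<and> (\<forall>f\<in>D. \<forall>g\<in>D. \<exists>h\<in>D. dual_le h f \<and> dual_le h g)
     \<and> (\<forall>f\<in>D. dual_le 0 f)
     \<and> (\<forall>h. (\<forall>f\<in>D. dual_le h f) \<longrightarrow> dual_le h 0)"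

lemma dual_order_continuous_iff:
  "dual_order_continuous TYPE('a::banach_lattice)
     \<longleftrightarrow> (\<forall>D :: ('a \<Rightarrow>\<^sub>L real) set. dual_decreasing_to_0 D \<longrightarrow> (INF f\<in>D. norm f) = 0)"
  by (simp add: dual_order_continuous_def dual_decreasing_to_0_def)

lemma cone_linear_INF_directed:
  fixes D :: "('a::banach_lattice \<Rightarrow>\<^sub>L real) set"
  assumes ne: "D \<noteq> {}" and dir: "\<forall>f\<in>D. \<forall>g\<in>D. \<exists>h\<in>D. dual_le h f \<and> dual_le h g"
    and pos: "\<forall>f\<in>D. dual_le 0 f"
  shows "cone_linear (\<lambda>a. INF f\<in>D. blinfun_apply f a)"
proof -
  define G where "G a = (INF f\<in>D. blinfun_apply f a)" for a
  have lower: "G a \<le> blinfun_apply f a" if "f \<in> D" "0 \<le> a" for f a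
    unfolding G_def using that pos
    by (intro cINF_lower bdd_belowI2[of _ 0]) (auto simp: dual_le_def)
  have greatest: "c \<le> G a" if "\<And>f. f \<in> D \<Longrightarrow> c \<le> blinfun_apply f a" for c a
    unfolding G_def using ne that by (rule cINF_greatest)
  have "cone_linear G"
  proof (rule cone_linearI)
    fix a b :: 'a assume a: "0 \<le> a" and b: "0 \<le> b"
    show "G (a + b) = G a + G b"
    proof (rule order.antisym)
      show "G (a + b) \<le> G a + G b"
      proof (rule field_le_epsilon)
        fix e :: real assume e: "0 < e"
        have "\<exists>f\<in>D. blinfun_apply f x < G x + e/2" if "0 \<le> x" for x
          unfolding G_def using e that pos
          by (subst cINF_less_iff[symmetric]) (auto simp: ne dual_le_def intro: bdd_belowI2[of _ 0])
        then obtain f1 f2 where f: "f1 \<in> D" "f2 \<in> D"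
          "blinfun_apply f1 a < G a + e/2" "blinfun_apply f2 b < G b + e/2"
          using a b by meson
        then obtain h where h: "h \<in> D" "dual_le h f1" "dual_le h f2"
          using dir by blast
        have "G (a + b) \<le> blinfun_apply h a + blinfun_apply h b"
          using lower[OF h(1), of "a + b"] a b by (simp add: blinfun.add_right)
        also have "\<dots> \<le> blinfun_apply f1 a + blinfun_apply f2 b"
          using h a b by (intro add_mono) (auto simp: dual_le_def)
        finally show "G (a + b) \<le> G a + G b + e" using f by simp
      qed
      show "G a + G b \<le> G (a + b)"
        using lower a b by (intro greatest) (auto simp: blinfun.add_right intro: add_mono)
    qed
  next
    fix c :: real and a :: 'a assume c: "0 < c" and a: "0 \<le> a"
    have "G (c *\<^sub>R a) / c \<le> G a"
    proof (rule greatest)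
      fix f assume "f \<in> D"
      then have "G (c *\<^sub>R a) \<le> blinfun_apply f (c *\<^sub>R a)"
        using c a by (intro lower scaleR_nonneg_nonneg) simp_all
      then show "G (c *\<^sub>R a) / c \<le> blinfun_apply f a"
        using c by (simp add: blinfun.scaleR_right field_simps)
    qed
    then show "G (c *\<^sub>R a) \<le> c * G a"
      using c by (simp add: field_simps)
  qed
  then show ?thesis by (simp add: G_def[abs_def])
qed

text \<open>The pointwise infimum of a family \<open>D \<down> 0\<close> is a positive functional below \<open>D\<close>, hence \<open>\<le> 0\<close>.\<close>

lemma dual_decreasing_to_0_pointwise:
  fixes D :: "('a::banach_lattice \<Rightarrow>\<^sub>L real) set"
  assumes D: "dual_decreasing_to_0 D" and a: "0 \<le> a" and e: "0 < e"
  obtains f where "f \<in> D" "blinfun_apply f a < e"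
proof -
  note D' = D[unfolded dual_decreasing_to_0_def]
  define G where "G a = (INF f\<in>D. blinfun_apply f a)" for a
  have bdd: "bdd_below ((\<lambda>f. blinfun_apply f x) ` D)" if "0 \<le> x" for x
    using that D' by (intro bdd_belowI2[of _ 0]) (auto simp: dual_le_def)
  have lower: "G x \<le> blinfun_apply f x" if "f \<in> D" "0 \<le> x" for f x
    unfolding G_def using bdd[OF that(2)] that(1) by (rule cINF_lower)
  obtain f0 where "f0 \<in> D" using D' by blast
  have "0 \<le> G x \<and> G x \<le> norm f0 * norm x" if "0 \<le> x" for x
    using that lower[OF \<open>f0 \<in> D\<close> that] norm_blinfun[of f0 x] D' pos_functional_nonneg
    unfolding G_def by (auto simp: dual_le_def intro!: cINF_greatest)
  then obtain g where g: "dual_le 0 g" and g_eq: "\<And>x. 0 \<le> x \<Longrightarrow> blinfun_apply g x = G x"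
    using pos_functional_of_cone_linear cone_linear_INF_directed[of D] D' unfolding G_def by blast
  have "\<forall>f\<in>D. dual_le g f"
    using g_eq lower by (simp add: dual_le_def)
  then have "dual_le g 0"
    using D' by blast
  then have "G a \<le> 0"
    using a g_eq[OF a] unfolding dual_le_def by fastforce
  with e have "(INF f\<in>D. blinfun_apply f a) < e"
    by (simp add: G_def)
  then show ?thesis
    using that cINF_less_iff[OF _ bdd[OF a]] D' by blast
qed

definition norm_dominated :: "('a::real_normed_vector \<times> real) set \<Rightarrow> bool" where
  "norm_dominated G \<longleftrightarrow> subspace G \<and> (\<forall>(x, a)\<in>G. a \<le> norm x)"

lemma norm_dominated_extend:
  fixes M :: "('a::real_normed_vector \<times> real) set"
  assumes M: "norm_dominated M" and x0: "\<And>a. (x0, a) \<notin> M"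
  obtains M' where "norm_dominated M'" "M \<subset> M'"
proof -
  have sub: "subspace M" and dom: "\<And>x a. (x, a) \<in> M \<Longrightarrow> a \<le> norm x"
    using M by (auto simp: norm_dominated_def)
  have scale: "(t *\<^sub>R s, t * a) \<in> M" if "(s, a) \<in> M" for s a t
    using subspace_scale[OF sub that, of t] by simp
  have gap: "a - norm (s - x0) \<le> norm (s' + x0) - a'" if "(s, a) \<in> M" "(s', a') \<in> M" for s a s' a'
  proof -
    have "a + a' \<le> norm (s + s')"
      using dom subspace_add[OF sub that] by simp
    also have "\<dots> \<le> norm (s - x0) + norm (s' + x0)"
      using norm_triangle_ineq[of "s - x0" "s' + x0"] by simp
    finally show ?thesis by simp
  qed
  have M0: "(0, 0) \<in> M"
    using subspace_0[OF sub] by (simp add: zero_prod_def)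
  define c where "c = (SUP (s, a)\<in>M. a - norm (s - x0))"
  have "bdd_above ((\<lambda>(s, a). a - norm (s - x0)) ` M)"
    using gap[OF _ M0] by (intro bdd_aboveI2[where M = "norm x0"]) auto
  then have c_ge: "a - norm (s - x0) \<le> c" if "(s, a) \<in> M" for s a
    unfolding c_def using cSUP_upper[OF that] by fastforce
  have c_le: "c \<le> norm (s + x0) - a" if "(s, a) \<in> M" for s a
    unfolding c_def using M0 gap[OF _ that] by (intro cSUP_least) auto
  define M' where "M' = {p + q | p q. p \<in> M \<and> q \<in> span {(x0, c)}}"
  have dom': "a + t * c \<le> norm (s + t *\<^sub>R x0)" if "(s, a) \<in> M" for s a t
  proof (cases t "0::real" rule: linorder_cases)
    case less
    have "(1 / - t) *\<^sub>R s - x0 = (1 / - t) *\<^sub>R (s + t *\<^sub>R x0)"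
      using less by (simp add: algebra_simps)
    then have "norm ((1 / - t) *\<^sub>R s - x0) = norm (s + t *\<^sub>R x0) / - t"
      using less by (simp only: norm_scaleR) simp
    then have "(1 / - t) * a - norm (s + t *\<^sub>R x0) / - t \<le> c"
      using c_ge[OF scale[OF that, of "1 / - t"]] by simp
    then show ?thesis
      using less by (simp add: field_simps)
  next
    case greater
    have "(1 / t) *\<^sub>R s + x0 = (1 / t) *\<^sub>R (s + t *\<^sub>R x0)"
      using greater by (simp add: algebra_simps)
    then have "norm ((1 / t) *\<^sub>R s + x0) = norm (s + t *\<^sub>R x0) / t"
      using greater by (simp only: norm_scaleR) simp
    then have "c \<le> norm (s + t *\<^sub>R x0) / t - (1 / t) * a"
      using c_le[OF scale[OF that, of "1 / t"]] by simp
    then show ?thesis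
      using greater by (simp add: field_simps)
  qed (use dom that in simp)
  have "subspace M'"
    unfolding M'_def by (rule subspace_sums[OF sub subspace_span])
  moreover have "\<forall>(x, a)\<in>M'. a \<le> norm x"
    using dom' by (auto simp: M'_def span_singleton)
  ultimately have "norm_dominated M'"
    by (simp add: norm_dominated_def)
  moreover have "M \<subseteq> M'"
  proof
    fix p assume "p \<in> M"
    then show "p \<in> M'"
      unfolding M'_def by (intro CollectI exI[of _ p] exI[of _ 0]) (simp add: span_zero)
  qed
  moreover have "(x0, c) \<in> M'"
    unfolding M'_def using subspace_0[OF sub]
    by (intro CollectI exI[of _ 0] exI[of _ "(x0, c)"]) (simp add: span_base)
  ultimately show ?thesis
    using that x0 by blast
qed

lemma norm_dominated_Union_chain:
  assumes "C \<noteq> {}" "subset.chain {M. norm_dominated M} C"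
  shows "norm_dominated (\<Union>C)"
proof -
  have sub: "\<And>M. M \<in> C \<Longrightarrow> subspace M" and dom: "\<And>M. M \<in> C \<Longrightarrow> \<forall>(x, a)\<in>M. a \<le> norm x"
    using assms(2) by (auto simp: subset.chain_def norm_dominated_def)
  have chain: "\<And>M N. M \<in> C \<Longrightarrow> N \<in> C \<Longrightarrow> M \<subseteq> N \<or> N \<subseteq> M"
    using assms(2) unfolding subset.chain_def by blast
  have "u + v \<in> \<Union>C" if uv: "u \<in> \<Union>C" "v \<in> \<Union>C" for u v
  proof -
    obtain M N where "M \<in> C" "N \<in> C" "u \<in> M" "v \<in> N"
      using uv by blast
    then obtain L where "L \<in> C" "u \<in> L" "v \<in> L"
      using chain[of M N] by blast
    then show ?thesis
      using subspace_add[OF sub] by blast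
  qed
  moreover have "c *\<^sub>R u \<in> \<Union>C" if "u \<in> \<Union>C" for c u
    using that subspace_scale[OF sub] by blast
  moreover have "0 \<in> \<Union>C"
    using assms(1) subspace_0[OF sub] by blast
  moreover have "\<forall>(x, a)\<in>\<Union>C. a \<le> norm x"
    using dom by blast
  ultimately show ?thesis
    by (simp add: norm_dominated_def subspace_def)
qed

text \<open>Domination forces the relation to be single-valued: \<open>(0, a - b) \<in> M\<close> gives \<open>a \<le> b\<close>.\<close>

lemma norm_dominated_graph:
  fixes M :: "('a::real_normed_vector \<times> real) set"
  assumes M: "norm_dominated M" and total: "\<And>x. \<exists>a. (x, a) \<in> M"
  obtains g :: "'a \<Rightarrow>\<^sub>L real" where "\<And>x a. (x, a) \<in> M \<Longrightarrow> blinfun_apply g x = a"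
proof -
  have sub: "subspace M" and dom: "\<And>x a. (x, a) \<in> M \<Longrightarrow> a \<le> norm x"
    using M by (auto simp: norm_dominated_def)
  have add: "(x + y, a + b) \<in> M" if "(x, a) \<in> M" "(y, b) \<in> M" for x y a b
    using subspace_add[OF sub that] by simp
  have scale: "(c *\<^sub>R x, c * a) \<in> M" if "(x, a) \<in> M" for x a c
    using subspace_scale[OF sub that] by simp
  have unique: "a = b" if "(x, a) \<in> M" "(x, b) \<in> M" for x a b
    using dom[OF add[OF that(1) scale[OF that(2), of "-1"]]]
      dom[OF add[OF that(2) scale[OF that(1), of "-1"]]] by simp
  define h where "h x = (THE a. (x, a) \<in> M)" for x
  have h: "(x, a) \<in> M \<Longrightarrow> h x = a" for x a
    unfolding h_def using unique by blast
  have graph: "(x, h x) \<in> M" for x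
    using total[of x] h by blast
  have "bounded_linear h"
  proof (rule bounded_linear_intro[where K = 1])
    show "h (x + y) = h x + h y" for x y
      using h[OF add[OF graph graph]] by simp
    show "h (c *\<^sub>R x) = c *\<^sub>R h x" for c x
      using h[OF scale[OF graph]] by simp
    show "norm (h x) \<le> norm x * 1" for x
      using dom[OF graph[of x]] dom[OF scale[OF graph[of x], of "-1"]] by (simp add: abs_le_iff)
  qed
  then show ?thesis
    using that[of "Blinfun h"] h by (simp add: bounded_linear_Blinfun_apply)
qed

lemma hahn_banach_norming:
  fixes y :: "'a::real_normed_vector"
  obtains g :: "'a \<Rightarrow>\<^sub>L real" where "blinfun_apply g y = norm y"
proof -
  define A where "A = {M. norm_dominated M \<and> (y, norm y) \<in> M}"
  have "a \<le> norm x" if xa: "(x, a) \<in> span {(y, norm y)}" for x a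
  proof -
    obtain t where "x = t *\<^sub>R y" "a = t * norm y"
      using xa by (auto simp: span_singleton)
    then show ?thesis by (simp add: abs_mult mult_right_mono)
  qed
  then have "span {(y, norm y)} \<in> A"
    by (auto simp: A_def norm_dominated_def span_base)
  moreover have "\<Union>C \<in> A" if C: "C \<noteq> {}" "subset.chain A C" for C
  proof -
    have "C \<subseteq> A" "subset.chain {M. norm_dominated M} C"
      using C(2) by (auto simp: subset.chain_def A_def)
    then show ?thesis
      using C(1) norm_dominated_Union_chain[of C] by (auto simp: A_def)
  qed
  ultimately obtain M where "M \<in> A" and max: "\<And>N. N \<in> A \<Longrightarrow> M \<subseteq> N \<Longrightarrow> N = M"
    using subset_Zorn_nonempty[of A] by blast
  then have M: "norm_dominated M" "(y, norm y) \<in> M"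
    by (simp_all add: A_def)
  have "\<exists>a. (x, a) \<in> M" for x
  proof (rule ccontr)
    assume "\<nexists>a. (x, a) \<in> M"
    then obtain N where "norm_dominated N" "M \<subset> N"
      using norm_dominated_extend[OF M(1)] by blast
    then show False
      using max[of N] M(2) by (auto simp: A_def)
  qed
  then obtain g :: "'a \<Rightarrow>\<^sub>L real" where "\<And>x a. (x, a) \<in> M \<Longrightarrow> blinfun_apply g x = a"
    using norm_dominated_graph[OF M(1)] by blast
  then show ?thesis
    using that M(2) by blast
qed

lemma weakly_null_bounded_linear_image:
  assumes "bounded_linear T" "weakly_null x"
  shows "weakly_null (\<lambda>n. T (x n))"
  unfolding weakly_null_def
proof
  fix g :: "'b \<Rightarrow>\<^sub>L real"
  have "bounded_linear (\<lambda>u. blinfun_apply g (T u))"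
    using bounded_linear_compose[OF blinfun.bounded_linear_right assms(1)] .
  moreover have "(\<lambda>n. blinfun_apply (Blinfun (\<lambda>u. blinfun_apply g (T u))) (x n)) \<longlonglongrightarrow> 0"
    using assms(2) by (simp add: weakly_null_def)
  ultimately show "(\<lambda>n. blinfun_apply g (T (x n))) \<longlonglongrightarrow> 0"
    by (simp add: bounded_linear_Blinfun_apply)
qed

lemma weakly_null_subseq_limit:
  assumes "weakly_null x" "strict_mono r" "(x \<circ> r) \<longlonglongrightarrow> l"
  shows "l = 0"
proof -
  obtain g where g: "blinfun_apply g l = norm l"
    by (rule hahn_banach_norming)
  have "(\<lambda>n. blinfun_apply g ((x \<circ> r) n)) \<longlonglongrightarrow> blinfun_apply g l"
    by (intro blinfun.tendsto assms(3) tendsto_const)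
  moreover have "(\<lambda>n. blinfun_apply g (x n)) \<longlonglongrightarrow> 0"
    using assms(1) by (simp add: weakly_null_def)
  from LIMSEQ_subseq_LIMSEQ[OF this assms(2)]
  have "(\<lambda>n. blinfun_apply g ((x \<circ> r) n)) \<longlonglongrightarrow> 0"
    by (simp add: o_def)
  ultimately show ?thesis
    using g LIMSEQ_unique by fastforce
qed

lemma compact_op_weakly_null:
  fixes T :: "'a::real_normed_vector \<Rightarrow> 'b::real_normed_vector"
  assumes T: "compact_op T" and bounded: "bounded (range x)" and x: "weakly_null x"
  shows "(\<lambda>n. T (x n)) \<longlonglongrightarrow> 0"
proof (rule ccontr)
  assume "\<not> ?thesis"
  then obtain e where e: "0 < e" and "\<forall>N. \<exists>n\<ge>N. e \<le> norm (T (x n))"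
    unfolding LIMSEQ_iff by (auto simp: not_less)
  then have "infinite {n. e \<le> norm (T (x n))}"
    by (simp add: infinite_nat_iff_unbounded_le)
  then obtain r :: "nat \<Rightarrow> nat" where r: "strict_mono r" and large: "\<And>n. e \<le> norm (T (x (r n)))"
    using infinite_enumerate by blast
  have lin: "bounded_linear T" and "compact (closure (T ` ball 0 1))"
    using T by (simp_all add: compact_op_def)
  obtain b where b: "0 < b" "\<And>n. norm (x n) \<le> b"
    using bounded by (auto simp: bounded_pos)
  define K where "K = (\<lambda>v. (b + 1) *\<^sub>R v) ` closure (T ` ball 0 1)"
  have "compact K"
    unfolding K_def by (rule compact_scaling) fact
  moreover have "T (x n) \<in> K" for n
  proof -
    have "(1 / (b + 1)) *\<^sub>R x n \<in> ball 0 1"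
      using b(1) b(2)[of n] by (simp add: field_simps)
    moreover have "T (x n) = (b + 1) *\<^sub>R T ((1 / (b + 1)) *\<^sub>R x n)"
      using b(1) by (simp add: linear_cmul[OF bounded_linear.linear[OF lin]])
    ultimately show ?thesis
      unfolding K_def by (blast intro: closure_subset[THEN subsetD])
  qed
  ultimately obtain l r' where r': "strict_mono r'" and lim: "((\<lambda>n. T (x (r n))) \<circ> r') \<longlonglongrightarrow> l"
    using compact_imp_seq_compact[of K, unfolded seq_compact_def, rule_format, of "\<lambda>n. T (x (r n))"]
    by blast
  have "((\<lambda>n. T (x n)) \<circ> (r \<circ> r')) \<longlonglongrightarrow> l"
    using lim by (simp add: o_def)
  then have "l = 0"
    using weakly_null_subseq_limit weakly_null_bounded_linear_image[OF lin x]
      strict_mono_o[OF r r'] by blast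
  moreover have "e \<le> norm l"
    using large by (intro LIMSEQ_le_const[OF tendsto_norm[OF lim]]) auto
  ultimately show False
    using e by simp
qed

lemma positive_op_rank_one:
  "dual_le 0 f \<Longrightarrow> 0 \<le> e \<Longrightarrow> positive_op (\<lambda>x. blinfun_apply f x *\<^sub>R e)"
  by (simp add: positive_op_def pos_functional_nonneg scaleR_nonneg_nonneg)

lemma bounded_linear_rank_one: "bounded_linear (\<lambda>x. blinfun_apply f x *\<^sub>R e)"
  by (rule bounded_linear_compose[OF bounded_linear_scaleR_left blinfun.bounded_linear_right])

lemma dunford_pettis_op_rank_one: "dunford_pettis_op (\<lambda>x. blinfun_apply f x *\<^sub>R e)"
  unfolding dunford_pettis_op_def weakly_null_def
  by (auto intro: bounded_linear_rank_one tendsto_scaleR[OF _ tendsto_const, of _ 0, simplified])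

lemma compact_op_rank_one: "compact_op (\<lambda>x. blinfun_apply f x *\<^sub>R e)"
proof -
  define K where "K = (\<lambda>r. r *\<^sub>R e) ` {- norm f .. norm f}"
  have K: "compact K"
    unfolding K_def by (intro compact_continuous_image continuous_intros compact_Icc)
  have "(\<lambda>x. blinfun_apply f x *\<^sub>R e) ` ball 0 1 \<subseteq> K"
  proof clarify
    fix u :: 'a assume "u \<in> ball 0 1"
    then have "\<bar>blinfun_apply f u\<bar> \<le> norm f"
      using norm_blinfun[of f u] mult_left_mono[of "norm u" 1 "norm f"] by simp
    then show "blinfun_apply f u *\<^sub>R e \<in> K"
      unfolding K_def by (intro imageI) (simp add: abs_le_iff)
  qed
  then have "closure ((\<lambda>x. blinfun_apply f x *\<^sub>R e) ` ball 0 1) \<subseteq> K"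
    by (rule closure_minimal[OF _ compact_imp_closed[OF K]])
  then have "closure ((\<lambda>x. blinfun_apply f x *\<^sub>R e) ` ball 0 1) \<inter> K
      = closure ((\<lambda>x. blinfun_apply f x *\<^sub>R e) ` ball 0 1)"
    by (rule Int_absorb2)
  then have "compact (closure ((\<lambda>x. blinfun_apply f x *\<^sub>R e) ` ball 0 1))"
    using closed_Int_compact[OF closed_closure K, of "(\<lambda>x. blinfun_apply f x *\<^sub>R e) ` ball 0 1"]
    by (simp only:)
  then show ?thesis
    by (simp add: compact_op_def bounded_linear_rank_one)
qed

lemma pos_functional_disjoint_null:
  fixes w :: "nat \<Rightarrow> 'a::banach_lattice"
  assumes p: "dual_le 0 p" and nonneg: "\<And>k. 0 \<le> w k"
    and disjoint: "\<And>j k. j \<noteq> k \<Longrightarrow> inf (w j) (w k) = 0" and le: "\<And>k. w k \<le> u"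
  shows "(\<lambda>k. blinfun_apply p (w k)) \<longlonglongrightarrow> 0"
proof -
  have "(\<Sum>k<N. blinfun_apply p (w k)) \<le> blinfun_apply p u" for N
    using pos_functional_mono[OF p sum_disjoint_le[OF nonneg disjoint le]]
    by (simp add: blinfun.sum_right)
  then have "summable (\<lambda>k. blinfun_apply p (w k))"
    using pos_functional_nonneg[OF p nonneg] by (intro summableI_nonneg_bounded) auto
  then show ?thesis
    by (rule summable_LIMSEQ_zero)
qed

lemma disjoint_uaw_null:
  fixes y :: "nat \<Rightarrow> 'a::banach_lattice"
  assumes nonneg: "\<And>k. 0 \<le> y k" and disjoint: "\<And>j k. j \<noteq> k \<Longrightarrow> inf (y j) (y k) = 0"
  shows "uaw_null y"
  unfolding uaw_null_def
proof (intro allI impI weakly_nullI_pos_functional)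
  fix u p :: 'a assume "0 \<le> u"
  fix p :: "'a \<Rightarrow>\<^sub>L real" assume p: "dual_le 0 p"
  have "inf (inf (y j) u) (inf (y k) u) = 0" if "j \<noteq> k" for j k
  proof (rule order.antisym)
    show "inf (inf (y j) u) (inf (y k) u) \<le> 0"
      using disjoint[OF that] by (metis inf.cobounded1 inf_mono)
  qed (use nonneg \<open>0 \<le> u\<close> in simp)
  then show "(\<lambda>n. blinfun_apply p (inf (labs (y n)) u)) \<longlonglongrightarrow> 0"
    using pos_functional_disjoint_null[OF p, of "\<lambda>n. inf (y n) u" u] nonneg \<open>0 \<le> u\<close>
    by (simp add: labs_of_nonneg)
qed

lemma inf_pprt_diff_scaleR_eq_0:
  fixes a b :: "'a::banach_lattice"
  assumes b: "0 \<le> b" and t: "0 \<le> t" and st: "1 \<le> s * t"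
  shows "inf (pprt (a - s *\<^sub>R b)) (pprt (b - t *\<^sub>R a)) = 0"
proof -
  define m where "m = inf (a - s *\<^sub>R b) (b - t *\<^sub>R a)"
  have "t *\<^sub>R m + m \<le> t *\<^sub>R (a - s *\<^sub>R b) + (b - t *\<^sub>R a)"
    unfolding m_def using t by (intro add_mono scaleR_left_mono) simp_all
  also have "\<dots> = (1 - s * t) *\<^sub>R b"
    by (simp add: algebra_simps)
  also have "\<dots> \<le> 0"
    using st b by (simp add: scaleR_nonpos_nonneg)
  finally have "(t + 1) *\<^sub>R m \<le> 0"
    by (simp add: algebra_simps)
  then have "m \<le> 0"
    using t by (auto simp: scaleR_le_0_iff)
  then show ?thesis
    unfolding inf_pprt_pprt m_def[symmetric] by simp
qed

definition dyadic_sum :: "(nat \<Rightarrow> 'a::banach_lattice) \<Rightarrow> 'a" where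
  "dyadic_sum w = (\<Sum>j. (1/2::real)^j *\<^sub>R w j)"

text \<open>
  Subtracting \<open>4^k\<close> times the earlier terms makes the \<open>k\<close>-th part disjoint from the earlier parts,
  subtracting \<open>2^-k\<close> times the weighted sum of all terms makes it disjoint from the later ones
  (lemma \<open>inf_pprt_diff_scaleR_eq_0\<close> with \<open>s t = 2^(k-j) \<ge> 1\<close>).
\<close>

definition disjointify :: "(nat \<Rightarrow> 'a::banach_lattice) \<Rightarrow> nat \<Rightarrow> 'a" where
  "disjointify w k = pprt (w k - ((4^k) *\<^sub>R (\<Sum>i<k. w i) + (1/2::real)^k *\<^sub>R dyadic_sum w))"

lemma disjointify_nonneg: "0 \<le> disjointify w k"
  by (simp add: disjointify_def)

context
  fixes w :: "nat \<Rightarrow> 'a::banach_lattice" and M :: real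
  assumes nonneg: "\<And>k. 0 \<le> w k" and bounded: "\<And>k. norm (w k) \<le> M"
begin

lemma summable_dyadic: "summable (\<lambda>j. (1/2::real)^j *\<^sub>R w j)"
proof (rule summable_comparison_test'[where g = "\<lambda>j. (1/2)^j * M" and N = 0])
  show "summable (\<lambda>j. (1/2::real)^j * M)"
    by (intro summable_mult2 summable_geometric) simp
  show "norm ((1/2::real)^j *\<^sub>R w j) \<le> (1/2)^j * M" for j
    using bounded[of j] by (simp add: mult_left_mono)
qed

lemma dyadic_sum_ge: "(1/2::real)^j *\<^sub>R w j \<le> dyadic_sum w"
  unfolding dyadic_sum_def using nonneg
  by (intro suminf_ge_term summable_dyadic scaleR_nonneg_nonneg) simp_all

lemma dyadic_sum_nonneg: "0 \<le> dyadic_sum w"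
  using order_trans[OF nonneg[of 0] dyadic_sum_ge[of 0, simplified]] .

lemma disjointify_subtrahend_nonneg:
  "0 \<le> (4^k) *\<^sub>R (\<Sum>i<k. w i) + (1/2::real)^k *\<^sub>R dyadic_sum w"
  using nonneg dyadic_sum_nonneg by (intro add_nonneg_nonneg scaleR_nonneg_nonneg sum_nonneg) simp_all

lemma disjointify_le: "disjointify w k \<le> w k"
proof -
  have "disjointify w k \<le> pprt (w k)"
    unfolding disjointify_def using disjointify_subtrahend_nonneg[of k]
    by (intro pprt_mono) (simp only: diff_le_eq le_add_same_cancel1)
  then show ?thesis
    using nonneg[of k] by simp
qed

lemma norm_disjointify_le: "norm (disjointify w k) \<le> M"
  by (rule order_trans[OF norm_mono_nonneg[OF disjointify_nonneg disjointify_le] bounded])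

lemma diff_disjointify_le:
  "w k - disjointify w k \<le> inf (w k) ((4^k) *\<^sub>R (\<Sum>i<k. w i)) + (1/2::real)^k *\<^sub>R dyadic_sum w"
proof -
  have "w k - disjointify w k = inf (w k) ((4^k) *\<^sub>R (\<Sum>i<k. w i) + (1/2::real)^k *\<^sub>R dyadic_sum w)"
    unfolding disjointify_def diff_inf_eq_pprt[symmetric] by (simp add: add.commute)
  also have "\<dots> \<le> inf (w k) ((4^k) *\<^sub>R (\<Sum>i<k. w i)) + (1/2::real)^k *\<^sub>R dyadic_sum w"
    using dyadic_sum_nonneg by (intro inf_add_nonneg_le scaleR_nonneg_nonneg) simp_all
  finally show ?thesis .
qed

lemma disjointify_disjoint_less:
  assumes "j < k"
  shows "inf (disjointify w j) (disjointify w k) = 0"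
proof -
  have "(\<Sum>i<k. w i) = w j + (\<Sum>i\<in>{..<k} - {j}. w i)"
    using assms by (simp add: sum.remove)
  then have "w j \<le> (\<Sum>i<k. w i)"
    using nonneg by (simp add: sum_nonneg)
  then have "(4^k) *\<^sub>R w j \<le> (4^k) *\<^sub>R (\<Sum>i<k. w i)"
    by (intro scaleR_left_mono) simp_all
  also have "\<dots> \<le> (4^k) *\<^sub>R (\<Sum>i<k. w i) + (1/2::real)^k *\<^sub>R dyadic_sum w"
    using dyadic_sum_nonneg by (simp add: scaleR_nonneg_nonneg)
  finally have k: "disjointify w k \<le> pprt (w k - (4^k) *\<^sub>R w j)"
    unfolding disjointify_def by (intro pprt_mono diff_left_mono)
  have "((1/2::real)^j * (1/2)^k) *\<^sub>R w k \<le> (1/2::real)^j *\<^sub>R dyadic_sum w"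
    using scaleR_left_mono[OF dyadic_sum_ge[of k], of "(1/2)^j"] by simp
  also have "\<dots> \<le> (4^j) *\<^sub>R (\<Sum>i<j. w i) + (1/2::real)^j *\<^sub>R dyadic_sum w"
    using nonneg by (simp add: scaleR_nonneg_nonneg sum_nonneg)
  finally have j: "disjointify w j \<le> pprt (w j - ((1/2::real)^j * (1/2)^k) *\<^sub>R w k)"
    unfolding disjointify_def by (intro pprt_mono diff_left_mono)
  have "(2::real)^j * 2^k \<le> 2^k * 2^k"
    using assms by (intro mult_right_mono power_increasing) simp_all
  also have "\<dots> = 4^k"
    by (simp flip: power_mult_distrib)
  finally have "1 \<le> (4::real)^k * ((1/2)^j * (1/2)^k)"
    by (simp add: field_simps)
  then have "inf (pprt (w k - (4^k) *\<^sub>R w j)) (pprt (w j - ((1/2::real)^j * (1/2)^k) *\<^sub>R w k)) = 0"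
    using nonneg by (intro inf_pprt_diff_scaleR_eq_0) simp_all
  then have "inf (disjointify w j) (disjointify w k) \<le> 0"
    using j k by (metis inf_commute inf_mono)
  moreover have "0 \<le> inf (disjointify w j) (disjointify w k)"
    by (simp add: disjointify_nonneg)
  ultimately show ?thesis
    by (rule order.antisym)
qed

lemma disjointify_disjoint: "j \<noteq> k \<Longrightarrow> inf (disjointify w j) (disjointify w k) = 0"
  using disjointify_disjoint_less[of j k] disjointify_disjoint_less[of k j]
  by (cases "j < k") (simp_all add: inf_commute)

lemma pos_functional_disjointify_ge:
  assumes "dual_le 0 q"
  shows "blinfun_apply q (w k) - blinfun_apply q (inf (w k) ((4^k) *\<^sub>R (\<Sum>i<k. w i)))
      - (1/2)^k * blinfun_apply q (dyadic_sum w) \<le> blinfun_apply q (disjointify w k)"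
  using pos_functional_mono[OF assms diff_disjointify_le[of k]]
  by (simp add: blinfun.diff_right blinfun.add_right blinfun.scaleR_right)

end

lemma tendsto_at_top_SUP_mono:
  fixes f :: "'a::linorder \<Rightarrow> 'b::{conditionally_complete_linorder, linorder_topology}"
  assumes "mono f" and "bdd_above (range f)"
  shows "(f \<longlongrightarrow> (SUP t. f t)) at_top"
proof (rule order_tendstoI)
  fix a assume "a < (SUP t. f t)"
  then obtain t0 where t0: "a < f t0"
    using less_cSUP_iff[OF _ assms(2)] by blast
  show "\<forall>\<^sub>F t in at_top. a < f t"
    using eventually_ge_at_top[of t0]
    by eventually_elim (use t0 assms(1) in \<open>auto dest: monoD\<close>)
next
  fix a assume "(SUP t. f t) < a"
  then show "\<forall>\<^sub>F t in at_top. f t < a"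
    using cSUP_upper[OF _ assms(2)] by (auto intro: always_eventually le_less_trans)
qed

text \<open>
  For \<open>p, y \<ge> 0\<close> this is \<open>p\<close> composed with the band projection onto the band generated by \<open>y\<close>,
  whenever that projection exists.
\<close>

definition band_component :: "('a::banach_lattice \<Rightarrow>\<^sub>L real) \<Rightarrow> 'a \<Rightarrow> 'a \<Rightarrow> real" where
  "band_component p y x = (SUP t. blinfun_apply p (inf x (t *\<^sub>R y)))"

context
  fixes p :: "'a::banach_lattice \<Rightarrow>\<^sub>L real" and y :: 'a
  assumes p: "dual_le 0 p" and y: "0 \<le> y"
begin

lemma band_component_mono: "mono (\<lambda>t. blinfun_apply p (inf x (t *\<^sub>R y)))"
  using y by (intro monoI pos_functional_mono[OF p] inf_mono scaleR_right_mono) simp_all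

lemma band_component_bdd: "bdd_above (range (\<lambda>t. blinfun_apply p (inf x (t *\<^sub>R y))))"
  by (intro bdd_aboveI2[where M = "blinfun_apply p x"] pos_functional_mono[OF p]) simp

lemma band_component_tendsto:
  "((\<lambda>t. blinfun_apply p (inf x (t *\<^sub>R y))) \<longlongrightarrow> band_component p y x) at_top"
  unfolding band_component_def by (rule tendsto_at_top_SUP_mono[OF band_component_mono band_component_bdd])

lemma band_component_ge: "blinfun_apply p (inf x (t *\<^sub>R y)) \<le> band_component p y x"
  unfolding band_component_def by (rule cSUP_upper[OF _ band_component_bdd]) simp

lemma band_component_le: "band_component p y x \<le> blinfun_apply p x"
  unfolding band_component_def by (intro cSUP_least pos_functional_mono[OF p]) simp_all

lemma band_component_nonneg: "0 \<le> x \<Longrightarrow> 0 \<le> band_component p y x"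
  using band_component_ge[of x 0] pos_functional_nonneg[OF p, of "inf x 0"] by simp

lemma band_component_self: "0 \<le> y \<Longrightarrow> blinfun_apply p y \<le> band_component p y y"
  using band_component_ge[of y 1] by simp

lemma cone_linear_band_component: "cone_linear (band_component p y)"
proof (rule cone_linearI)
  fix a b :: 'a assume a: "0 \<le> a" and b: "0 \<le> b"
  have lim: "((\<lambda>t. blinfun_apply p (inf a (t *\<^sub>R y)) + blinfun_apply p (inf b (t *\<^sub>R y)))
      \<longlongrightarrow> band_component p y a + band_component p y b) at_top"
    by (intro tendsto_add band_component_tendsto)
  have "\<forall>\<^sub>F t in at_top. blinfun_apply p (inf (a + b) (t *\<^sub>R y))
      \<le> blinfun_apply p (inf a (t *\<^sub>R y)) + blinfun_apply p (inf b (t *\<^sub>R y))"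
    using eventually_ge_at_top[of 0]
    by eventually_elim
       (use a b y in \<open>simp add: pos_functional_mono[OF p] inf_add_le_add_inf scaleR_nonneg_nonneg
          flip: blinfun.add_right\<close>)
  then have "band_component p y (a + b) \<le> band_component p y a + band_component p y b"
    using tendsto_le[OF _ lim band_component_tendsto] by simp
  moreover have "blinfun_apply p (inf a (t *\<^sub>R y)) + blinfun_apply p (inf b (t *\<^sub>R y))
      \<le> band_component p y (a + b)" for t
  proof -
    have "inf a (t *\<^sub>R y) + inf b (t *\<^sub>R y) \<le> t *\<^sub>R y + t *\<^sub>R y"
      by (intro add_mono) simp_all
    also have "\<dots> = (2 * t) *\<^sub>R y"
      by (simp add: scaleR_2 flip: scaleR_scaleR)
    finally have "inf a (t *\<^sub>R y) + inf b (t *\<^sub>R y) \<le> inf (a + b) ((2 * t) *\<^sub>R y)"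
      by (intro le_infI add_mono) simp_all
    then have "blinfun_apply p (inf a (t *\<^sub>R y)) + blinfun_apply p (inf b (t *\<^sub>R y))
        \<le> blinfun_apply p (inf (a + b) ((2 * t) *\<^sub>R y))"
      using pos_functional_mono[OF p] by (simp flip: blinfun.add_right)
    also have "\<dots> \<le> band_component p y (a + b)"
      by (rule band_component_ge)
    finally show ?thesis .
  qed
  then have "band_component p y a + band_component p y b \<le> band_component p y (a + b)"
    using tendsto_le[OF _ tendsto_const lim] by simp
  ultimately show "band_component p y (a + b) = band_component p y a + band_component p y b"
    by (rule order.antisym)
next
  fix c :: real and a :: 'a assume c: "0 < c" and a: "0 \<le> a"
  have "inf (c *\<^sub>R a) (t *\<^sub>R y) = c *\<^sub>R inf a ((t / c) *\<^sub>R y)" for t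
    using c by (simp add: scaleR_inf_nonneg)
  then have "blinfun_apply p (inf (c *\<^sub>R a) (t *\<^sub>R y)) = c * blinfun_apply p (inf a ((t / c) *\<^sub>R y))" for t
    by (simp add: blinfun.scaleR_right)
  also have "\<dots> t \<le> c * band_component p y a" for t
    using c by (intro mult_left_mono band_component_ge) simp_all
  finally show "band_component p y (c *\<^sub>R a) \<le> c * band_component p y a"
    unfolding band_component_def[of _ _ "c *\<^sub>R a"] by (intro cSUP_least) simp_all
qed

end

lemma sum_band_component_le:
  fixes y :: "nat \<Rightarrow> 'a::banach_lattice"
  assumes p: "dual_le 0 p" and nonneg: "\<And>k. 0 \<le> y k"
    and disjoint: "\<And>j k. j \<noteq> k \<Longrightarrow> inf (y j) (y k) = 0" and x: "0 \<le> x"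
  shows "(\<Sum>i\<in>I. band_component p (y i) x) \<le> blinfun_apply p x"
proof (rule tendsto_le[OF _ tendsto_const tendsto_sum])
  show "((\<lambda>t. blinfun_apply p (inf x (t *\<^sub>R y i))) \<longlongrightarrow> band_component p (y i) x) at_top" for i
    by (rule band_component_tendsto[OF p nonneg])
  show "\<forall>\<^sub>F t in at_top. (\<Sum>i\<in>I. blinfun_apply p (inf x (t *\<^sub>R y i))) \<le> blinfun_apply p x"
    using eventually_ge_at_top[of 0]
  proof eventually_elim
    case (elim t)
    have "inf (inf x (t *\<^sub>R y i)) (inf x (t *\<^sub>R y j)) = 0" if "i \<noteq> j" for i j
    proof (rule order.antisym)
      have "inf (inf x (t *\<^sub>R y i)) (inf x (t *\<^sub>R y j)) \<le> inf (t *\<^sub>R y i) (t *\<^sub>R y j)"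
        by (intro inf_mono) simp_all
      also have "\<dots> = 0"
        using elim disjoint[OF that] by (simp flip: scaleR_inf_nonneg)
      finally show "inf (inf x (t *\<^sub>R y i)) (inf x (t *\<^sub>R y j)) \<le> 0" .
    qed (use x elim nonneg in \<open>simp add: scaleR_nonneg_nonneg\<close>)
    then have "(\<Sum>i\<in>I. inf x (t *\<^sub>R y i)) \<le> x"
      using x elim nonneg by (intro sum_disjoint_le) (simp_all add: scaleR_nonneg_nonneg)
    then show ?case
      using pos_functional_mono[OF p] by (simp flip: blinfun.sum_right)
  qed
qed simp

definition tail_band_sum :: "('a::banach_lattice \<Rightarrow>\<^sub>L real) \<Rightarrow> (nat \<Rightarrow> 'a) \<Rightarrow> nat \<Rightarrow> 'a \<Rightarrow> real" where
  "tail_band_sum p y m x = (\<Sum>i. band_component p (y (i + m)) x)"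

context
  fixes p :: "'a::banach_lattice \<Rightarrow>\<^sub>L real" and y :: "nat \<Rightarrow> 'a"
  assumes p: "dual_le 0 p" and nonneg: "\<And>k. 0 \<le> y k"
    and disjoint: "\<And>j k. j \<noteq> k \<Longrightarrow> inf (y j) (y k) = 0"
begin

lemma summable_band_component:
  assumes "0 \<le> x"
  shows "summable (\<lambda>i. band_component p (y (i + m)) x)"
    and "tail_band_sum p y m x \<le> blinfun_apply p x"
proof -
  have "(\<Sum>i<n. band_component p (y (i + m)) x) \<le> blinfun_apply p x" for n
    using nonneg disjoint assms by (intro sum_band_component_le[OF p]) simp_all
  moreover have "0 \<le> band_component p (y (i + m)) x" for i
    using band_component_nonneg[OF p nonneg assms] .
  ultimately show summ: "summable (\<lambda>i. band_component p (y (i + m)) x)"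
    by (intro summableI_nonneg_bounded)
  show "tail_band_sum p y m x \<le> blinfun_apply p x"
    unfolding tail_band_sum_def by (intro suminf_le_const summ) fact
qed

lemma tail_band_sum_nonneg: "0 \<le> x \<Longrightarrow> 0 \<le> tail_band_sum p y m x"
  unfolding tail_band_sum_def
  by (intro suminf_nonneg summable_band_component band_component_nonneg[OF p nonneg])

lemma cone_linear_tail_band_sum: "cone_linear (tail_band_sum p y m)"
  unfolding cone_linear_def tail_band_sum_def
  using summable_band_component(1) cone_linear_band_component[OF p nonneg]
  by (simp add: cone_linear_add cone_linear_scaleR suminf_add suminf_mult)

lemma tail_band_sum_antimono:
  assumes "m \<le> m'" "0 \<le> x"
  shows "tail_band_sum p y m' x \<le> tail_band_sum p y m x"
proof -
  have "tail_band_sum p y m x = (\<Sum>i. band_component p (y (i + (m' - m) + m)) x)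
      + (\<Sum>i<m' - m. band_component p (y (i + m)) x)"
    unfolding tail_band_sum_def
    by (rule suminf_split_initial_segment[OF summable_band_component(1)[OF assms(2)]])
  moreover have "0 \<le> (\<Sum>i<m' - m. band_component p (y (i + m)) x)"
    using band_component_nonneg[OF p nonneg assms(2)] by (simp add: sum_nonneg)
  ultimately show ?thesis
    using assms(1) by (simp add: tail_band_sum_def add.assoc)
qed

lemma tail_band_sum_tendsto_0:
  assumes "0 \<le> x"
  shows "(\<lambda>m. tail_band_sum p y m x) \<longlonglongrightarrow> 0"
  unfolding tail_band_sum_def
  using suminf_exist_split[OF _ summable_band_component(1)[OF assms, of 0]]
  by (intro LIMSEQ_I) simp

lemma le_tail_band_sum:
  assumes "m \<le> k"
  shows "blinfun_apply p (y k) \<le> tail_band_sum p y m (y k)"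
proof -
  have "blinfun_apply p (y k) \<le> band_component p (y ((k - m) + m)) (y k)"
    using assms band_component_self[OF p nonneg nonneg] by simp
  also have "\<dots> \<le> tail_band_sum p y m (y k)"
    unfolding tail_band_sum_def using band_component_nonneg[OF p nonneg nonneg]
    by (intro sum_le_suminf[where I = "{k - m}", simplified] summable_band_component(1) nonneg) auto
  finally show ?thesis .
qed

end

lemma dual_decreasing_to_0_antimono_seq:
  fixes R :: "nat \<Rightarrow> 'a::banach_lattice \<Rightarrow>\<^sub>L real"
  assumes pos: "\<And>m. dual_le 0 (R m)" and antimono: "\<And>m m'. m \<le> m' \<Longrightarrow> dual_le (R m') (R m)"
    and lim: "\<And>x. 0 \<le> x \<Longrightarrow> (\<lambda>m. blinfun_apply (R m) x) \<longlonglongrightarrow> 0"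
  shows "dual_decreasing_to_0 (range R)"
  unfolding dual_decreasing_to_0_def
proof (intro conjI ballI allI impI)
  fix f g assume "f \<in> range R" "g \<in> range R"
  then obtain m m' where "f = R m" "g = R m'" by blast
  then show "\<exists>h\<in>range R. dual_le h f \<and> dual_le h g"
    using antimono[of m "max m m'"] antimono[of m' "max m m'"] by auto
next
  fix h assume below: "\<forall>f\<in>range R. dual_le h f"
  show "dual_le h 0"
    unfolding dual_le_def
  proof (intro allI impI)
    fix x :: 'a assume "0 \<le> x"
    then have "blinfun_apply h x \<le> 0"
      using below lim[of x] by (intro tendsto_lowerbound[OF lim[OF \<open>0 \<le> x\<close>]]) (auto simp: dual_le_def)
    then show "blinfun_apply h x \<le> blinfun_apply 0 x" by simp
  qed
qed (use pos in auto)

lemma dual_oc_disjoint_null: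
  fixes y :: "nat \<Rightarrow> 'a::banach_lattice"
  assumes oc: "dual_order_continuous TYPE('a)" and p: "dual_le 0 p"
    and nonneg: "\<And>k. 0 \<le> y k" and disjoint: "\<And>j k. j \<noteq> k \<Longrightarrow> inf (y j) (y k) = 0"
    and bounded: "\<And>k. norm (y k) \<le> M"
  shows "(\<lambda>k. blinfun_apply p (y k)) \<longlonglongrightarrow> 0"
proof -
  note tail = p nonneg disjoint
  have "\<forall>m. \<exists>g. dual_le 0 g \<and> (\<forall>x\<ge>0. blinfun_apply g x = tail_band_sum p y m x)"
  proof
    fix m
    have bound: "0 \<le> tail_band_sum p y m x \<and> tail_band_sum p y m x \<le> norm p * norm x"
      if "0 \<le> x" for x
    proof
      show "0 \<le> tail_band_sum p y m x"
        using tail_band_sum_nonneg[where p = p and y = y, OF tail that] .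
      have "blinfun_apply p x \<le> norm p * norm x"
        using norm_blinfun[of p x] by simp
      with summable_band_component(2)[where p = p and y = y and m = m, OF tail that]
      show "tail_band_sum p y m x \<le> norm p * norm x"
        by (rule order_trans)
    qed
    obtain g where "dual_le 0 g" "\<And>x. 0 \<le> x \<Longrightarrow> blinfun_apply g x = tail_band_sum p y m x"
      using pos_functional_of_cone_linear[OF cone_linear_tail_band_sum[where p = p and y = y, OF tail] bound]
      by blast
    then show "\<exists>g. dual_le 0 g \<and> (\<forall>x\<ge>0. blinfun_apply g x = tail_band_sum p y m x)"
      by blast
  qed
  from choice[OF this] obtain R where R: "\<And>m. dual_le 0 (R m)"
    and R_eq: "\<And>m x. 0 \<le> x \<Longrightarrow> blinfun_apply (R m) x = tail_band_sum p y m x"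
    by blast
  have "dual_decreasing_to_0 (range R)"
    using R tail_band_sum_antimono[where p = p and y = y, OF tail] tail_band_sum_tendsto_0[where p = p and y = y, OF tail]
    by (intro dual_decreasing_to_0_antimono_seq) (simp_all add: dual_le_def R_eq)
  then have "(INF f\<in>range R. norm f) = 0"
    using oc[unfolded dual_order_continuous_iff] by blast
  then have INF_0: "(INF m. norm (R m)) = 0"
    by (simp add: image_image)
  show ?thesis
  proof (rule LIMSEQ_I)
    fix e :: real assume "0 < e"
    have M: "0 \<le> M"
      using order_trans[OF norm_ge_zero bounded[of 0]] .
    then have "(INF m. norm (R m)) < e / (M + 1)"
      using \<open>0 < e\<close> INF_0 by simp
    moreover have "bdd_below (range (\<lambda>m. norm (R m)))"
      by (intro bdd_belowI2[where m = 0]) simp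
    ultimately obtain m where m: "norm (R m) < e / (M + 1)"
      using cINF_less_iff[OF UNIV_not_empty, of "\<lambda>m. norm (R m)"] by auto
    have "norm (blinfun_apply p (y k)) < e" if "m \<le> k" for k
    proof -
      have "norm (blinfun_apply p (y k)) \<le> blinfun_apply (R m) (y k)"
        using le_tail_band_sum[where p = p and y = y, OF tail that] pos_functional_nonneg[OF p nonneg] R_eq[OF nonneg] by simp
      also have "\<dots> \<le> norm (R m) * norm (y k)"
        using norm_blinfun[of "R m" "y k"] by simp
      also have "\<dots> \<le> e / (M + 1) * M"
        using m bounded[of k] M \<open>0 < e\<close> by (intro mult_mono) simp_all
      also have "\<dots> < e"
        using M \<open>0 < e\<close> by (simp add: field_simps)
      finally show ?thesis .
    qed
    then show "\<exists>no. \<forall>k\<ge>no. norm (blinfun_apply p (y k) - 0) < e"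
      by auto
  qed
qed

lemma partial_sum_choice:
  fixes P :: "nat \<Rightarrow> 'a::ordered_comm_monoid_add \<Rightarrow> 'a \<Rightarrow> bool"
  assumes step: "\<And>k s. 0 \<le> s \<Longrightarrow> \<exists>w\<ge>0. P k s w"
  obtains w where "\<And>k. 0 \<le> w k" "\<And>k. P k (\<Sum>i<k. w i) (w k)"
proof -
  define next_term where "next_term k s = (SOME w. 0 \<le> w \<and> P k s w)" for k s
  have next_term: "0 \<le> next_term k s \<and> P k s (next_term k s)" if "0 \<le> s" for k s
    unfolding next_term_def using someI_ex[OF step[OF that]] by simp
  define S where "S = rec_nat 0 (\<lambda>k s. s + next_term k s)"
  have S_0: "S 0 = 0" and S_Suc: "S (Suc k) = S k + next_term k (S k)" for k
    by (simp_all add: S_def)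
  have S_nonneg: "0 \<le> S k" for k
  proof (induction k)
    case (Suc k)
    then show ?case
      using next_term[OF Suc.IH] by (simp add: S_Suc add_nonneg_nonneg)
  qed (simp add: S_0)
  define w where "w k = next_term k (S k)" for k
  have "S k = (\<Sum>i<k. w i)" for k
    by (induction k) (simp_all add: S_0 S_Suc w_def)
  moreover have "0 \<le> w k \<and> P k (S k) (w k)" for k
    unfolding w_def by (rule next_term[OF S_nonneg])
  ultimately show ?thesis
    using that[of w] by simp
qed

lemma eventually_dyadic_small:
  assumes "0 < e"
  shows "\<forall>\<^sub>F k in sequentially. (1/2::real)^k * a < e"
  using order_tendstoD(2)[OF tendsto_mult_left_zero[OF LIMSEQ_realpow_zero[of "1/2::real"]] assms]
  by simp

lemma dual_oc_uaw_pos_null: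
  fixes x :: "nat \<Rightarrow> 'a::banach_lattice"
  assumes oc: "dual_order_continuous TYPE('a)" and bounded: "bounded (range x)"
    and uaw: "uaw_null x" and p: "dual_le 0 p"
  shows "(\<lambda>n. blinfun_apply p (labs (x n))) \<longlonglongrightarrow> 0"
proof (rule ccontr)
  assume "\<not> ?thesis"
  then obtain c where c: "0 < c" and often: "\<forall>N. \<exists>n\<ge>N. c \<le> norm (blinfun_apply p (labs (x n)))"
    unfolding LIMSEQ_iff by (auto simp: not_less)
  obtain M where M: "\<And>n. norm (labs (x n)) \<le> M"
    using bounded by (auto simp: bounded_iff norm_labs)
  have "0 < c / 4"
    using c by simp
  text \<open>Greedily pick \<open>w k = labs (x n)\<close> that is large for \<open>p\<close> but almost disjoint from the sum of the previous ones.\<close>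
  have "\<exists>w\<ge>0. (\<exists>n. w = labs (x n)) \<and> c \<le> blinfun_apply p w
      \<and> blinfun_apply p (inf w ((4^k) *\<^sub>R s)) < c / 4" if "0 \<le> s" for k s
  proof -
    have "(\<lambda>n. blinfun_apply p (inf (labs (x n)) ((4^k) *\<^sub>R s))) \<longlonglongrightarrow> 0"
      using uaw that unfolding uaw_null_def weakly_null_def by (simp add: scaleR_nonneg_nonneg)
    from LIMSEQ_D[OF this \<open>0 < c / 4\<close>] obtain N
      where N: "\<And>n. N \<le> n \<Longrightarrow> norm (blinfun_apply p (inf (labs (x n)) ((4^k) *\<^sub>R s)) - 0) < c / 4"
      by blast
    obtain n where "N \<le> n" "c \<le> norm (blinfun_apply p (labs (x n)))"
      using often by blast
    then show ?thesis
      using N[of n] pos_functional_nonneg[OF p labs_nonneg, of "x n"] labs_nonneg[of "x n"] by auto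
  qed
  then obtain w where w_nonneg: "\<And>k. 0 \<le> w k" and w: "\<And>k. (\<exists>n. w k = labs (x n))
      \<and> c \<le> blinfun_apply p (w k) \<and> blinfun_apply p (inf (w k) ((4^k) *\<^sub>R (\<Sum>i<k. w i))) < c / 4"
    using partial_sum_choice[where P = "\<lambda>k s w. (\<exists>n. w = labs (x n)) \<and> c \<le> blinfun_apply p w
      \<and> blinfun_apply p (inf w ((4^k) *\<^sub>R s)) < c / 4"] by metis
  have w_bounded: "norm (w k) \<le> M" for k
    using w[of k] M by auto
  have large: "\<forall>\<^sub>F k in sequentially. c / 2 \<le> blinfun_apply p (disjointify w k)"
    using eventually_dyadic_small[OF \<open>0 < c / 4\<close>, of "blinfun_apply p (dyadic_sum w)"]
  proof eventually_elim
    case (elim k)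
    then show ?case
      using w[of k] pos_functional_disjointify_ge[where w = w and M = M and k = k, OF w_nonneg w_bounded p] by linarith
  qed
  have "(\<lambda>k. blinfun_apply p (disjointify w k)) \<longlonglongrightarrow> 0"
    using disjointify_nonneg disjointify_disjoint[where w = w and M = M, OF w_nonneg w_bounded] norm_disjointify_le[where w = w and M = M, OF w_nonneg w_bounded]
    by (intro dual_oc_disjoint_null[OF oc p])
  from tendsto_lowerbound[OF this large sequentially_bot] show False
    using c by simp
qed

lemma dual_oc_uaw_weakly_null:
  fixes x :: "nat \<Rightarrow> 'a::banach_lattice"
  assumes "dual_order_continuous TYPE('a)" "bounded (range x)" "uaw_null x"
  shows "weakly_null x"
proof (rule weakly_nullI_pos_functional)
  fix p :: "'a \<Rightarrow>\<^sub>L real" assume p: "dual_le 0 p"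
  have "\<forall>n. norm (blinfun_apply p (x n)) \<le> blinfun_apply p (labs (x n))"
    using pos_functional_abs_le[OF p] by simp
  from Lim_null_comparison[OF always_eventually[OF this] dual_oc_uaw_pos_null[OF assms p]]
  show "(\<lambda>n. blinfun_apply p (x n)) \<longlonglongrightarrow> 0" .
qed

lemma not_dual_oc_witness:
  assumes "\<not> dual_order_continuous TYPE('a)"
  obtains f :: "'a::banach_lattice \<Rightarrow>\<^sub>L real" and y :: "nat \<Rightarrow> 'a"
  where "dual_le 0 f" "bounded (range y)" "uaw_null y" "\<not> (\<lambda>k. blinfun_apply f (y k)) \<longlonglongrightarrow> 0"
proof -
  obtain D :: "('a \<Rightarrow>\<^sub>L real) set" where D: "dual_decreasing_to_0 D" and "(INF f\<in>D. norm f) \<noteq> 0"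
    using assms by (auto simp: dual_order_continuous_iff)
  note D' = D[unfolded dual_decreasing_to_0_def]
  define d where "d = (INF f\<in>D. norm f)"
  have norm_ge: "d \<le> norm f" if "f \<in> D" for f
    unfolding d_def using that by (intro cINF_lower bdd_belowI2[where m = 0]) simp_all
  have "0 \<le> d"
    unfolding d_def using D' by (intro cINF_greatest) simp_all
  with \<open>(INF f\<in>D. norm f) \<noteq> 0\<close> have d: "0 < d"
    by (simp add: d_def)
  obtain f0 where f0: "f0 \<in> D" "dual_le 0 f0"
    using D' by blast
  text \<open>
    Greedily pick unit vectors \<open>w k \<ge> 0\<close> on which some \<open>F \<in> D\<close> below \<open>f0\<close> is large
    while \<open>F\<close> is small on \<open>4^k\<close> times the sum of the previous ones.
  \<close>
  have "\<exists>w\<ge>0. \<exists>F\<in>D. dual_le F f0 \<and> norm w \<le> 1 \<and> blinfun_apply F ((4^k) *\<^sub>R s) < d / 8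
      \<and> d / 2 < blinfun_apply F w" if s: "0 \<le> s" for k s
  proof -
    obtain f where f: "f \<in> D" "blinfun_apply f ((4^k) *\<^sub>R s) < d / 8"
      using dual_decreasing_to_0_pointwise[OF D, of "(4^k) *\<^sub>R s" "d / 8"] s d
      by (auto simp: scaleR_nonneg_nonneg)
    then obtain F where F: "F \<in> D" "dual_le F f" "dual_le F f0"
      using D' f0 by blast
    then have "dual_le 0 F" "d / 2 < norm F"
      using D' norm_ge[of F] d by auto
    then obtain w where "0 \<le> w" "norm w \<le> 1" "d / 2 < blinfun_apply F w"
      by (rule pos_functional_norm_approx)
    moreover have "blinfun_apply F ((4^k) *\<^sub>R s) \<le> blinfun_apply f ((4^k) *\<^sub>R s)"
      using F(2) s by (simp add: dual_le_def scaleR_nonneg_nonneg)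
    then have "blinfun_apply F ((4^k) *\<^sub>R s) < d / 8"
      using f(2) by simp
    ultimately show ?thesis
      using F by blast
  qed
  then obtain w where w_nonneg: "\<And>k. 0 \<le> w k" and "\<And>k. \<exists>F\<in>D. dual_le F f0 \<and> norm (w k) \<le> 1
      \<and> blinfun_apply F ((4^k) *\<^sub>R (\<Sum>i<k. w i)) < d / 8 \<and> d / 2 < blinfun_apply F (w k)"
    using partial_sum_choice[where P = "\<lambda>k s w. \<exists>F\<in>D. dual_le F f0 \<and> norm w \<le> 1
      \<and> blinfun_apply F ((4^k) *\<^sub>R s) < d / 8 \<and> d / 2 < blinfun_apply F w"] by metis
  then obtain F where F: "\<And>k. F k \<in> D" "\<And>k. dual_le (F k) f0" and w_bounded: "\<And>k. norm (w k) \<le> 1"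
    and F_small: "\<And>k. blinfun_apply (F k) ((4^k) *\<^sub>R (\<Sum>i<k. w i)) < d / 8"
    and F_large: "\<And>k. d / 2 < blinfun_apply (F k) (w k)"
    by metis
  define y where "y = disjointify w"
  have "0 < d / 8"
    using d by simp
  have "\<forall>\<^sub>F k in sequentially. d / 4 \<le> blinfun_apply f0 (y k)"
    using eventually_dyadic_small[OF \<open>0 < d / 8\<close>, of "blinfun_apply f0 (dyadic_sum w)"]
  proof eventually_elim
    case (elim k)
    have Fk: "dual_le 0 (F k)"
      using D' F(1) by blast
    have "blinfun_apply (F k) (inf (w k) ((4^k) *\<^sub>R (\<Sum>i<k. w i))) < d / 8"
      using pos_functional_mono[OF Fk inf_le2] F_small[of k] by (rule le_less_trans)
    moreover have "blinfun_apply (F k) (dyadic_sum w) \<le> blinfun_apply f0 (dyadic_sum w)"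
      using F(2)[of k] dyadic_sum_nonneg[where w = w and M = 1, OF w_nonneg w_bounded]
      by (simp add: dual_le_def)
    then have "(1/2)^k * blinfun_apply (F k) (dyadic_sum w) \<le> (1/2)^k * blinfun_apply f0 (dyadic_sum w)"
      by (intro mult_left_mono) simp_all
    moreover have "blinfun_apply (F k) (y k) \<le> blinfun_apply f0 (y k)"
      using F(2)[of k] disjointify_nonneg[of w k] unfolding dual_le_def y_def by blast
    ultimately show ?case
      using elim F_large[of k] pos_functional_disjointify_ge[where w = w and M = 1 and k = k, OF w_nonneg w_bounded Fk]
      unfolding y_def by linarith
  qed
  then have "\<not> (\<lambda>k. blinfun_apply f0 (y k)) \<longlonglongrightarrow> 0"
    using tendsto_lowerbound[OF _ _ sequentially_bot, of _ 0 "d / 4"] d by auto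
  moreover have "bounded (range y)"
    using norm_disjointify_le[where w = w and M = 1, OF w_nonneg w_bounded]
    by (auto simp: bounded_iff y_def)
  moreover have "uaw_null y"
    unfolding y_def using disjointify_nonneg disjointify_disjoint[where w = w and M = 1, OF w_nonneg w_bounded]
    by (rule disjoint_uaw_null)
  ultimately show ?thesis
    using that f0(2) by blast
qed

lemma uaw_dunford_pettis_opI_dual_oc:
  fixes T :: "'a::banach_lattice \<Rightarrow> 'b::real_normed_vector"
  assumes "dual_order_continuous TYPE('a)" and "bounded_linear T"
    and "\<And>x. bounded (range x) \<Longrightarrow> weakly_null x \<Longrightarrow> (\<lambda>n. T (x n)) \<longlonglongrightarrow> 0"
  shows "uaw_dunford_pettis_op T"
  using assms dual_oc_uaw_weakly_null by (auto simp: uaw_dunford_pettis_op_def)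

lemma uaw_dunford_pettis_op_trivial_codomain:
  fixes T :: "'a::banach_lattice \<Rightarrow> 'b::real_normed_vector"
  assumes "\<And>y::'b. y = 0" and "bounded_linear T"
  shows "uaw_dunford_pettis_op T"
  unfolding uaw_dunford_pettis_op_def
proof (intro conjI allI impI assms(2))
  fix x :: "nat \<Rightarrow> 'a"
  have "(\<lambda>n. T (x n)) = (\<lambda>n. 0)"
    using assms(1) by (intro ext)
  then show "(\<lambda>n. T (x n)) \<longlonglongrightarrow> 0"
    by simp
qed

lemma rank_one_not_uaw_dunford_pettis:
  fixes e :: "'b::banach_lattice"
  assumes "\<not> dual_order_continuous TYPE('a)" and "e \<noteq> 0"
  obtains T :: "'a::banach_lattice \<Rightarrow> 'b"
  where "positive_op T" "dunford_pettis_op T" "compact_op T" "\<not> uaw_dunford_pettis_op T"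
proof -
  obtain f :: "'a \<Rightarrow>\<^sub>L real" and y where f: "dual_le 0 f" and y: "bounded (range y)" "uaw_null y"
    and not_null: "\<not> (\<lambda>k. blinfun_apply f (y k)) \<longlonglongrightarrow> 0"
    using not_dual_oc_witness[OF assms(1)] by blast
  define T where "T x = blinfun_apply f x *\<^sub>R labs e" for x
  have "\<not> uaw_dunford_pettis_op T"
  proof
    assume "uaw_dunford_pettis_op T"
    then have "(\<lambda>k. norm (T (y k)) / norm (labs e)) \<longlonglongrightarrow> 0"
      using y by (intro tendsto_divide_zero tendsto_norm_zero) (simp add: uaw_dunford_pettis_op_def)
    moreover have "norm (T (y k)) / norm (labs e) = \<bar>blinfun_apply f (y k)\<bar>" for k
      using assms(2) by (simp add: T_def norm_labs)
    ultimately show False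
      using not_null by (simp add: tendsto_rabs_zero_iff)
  qed
  moreover have "positive_op T" "dunford_pettis_op T" "compact_op T"
    unfolding T_def[abs_def]
    by (simp_all add: positive_op_rank_one[OF f labs_nonneg] dunford_pettis_op_rank_one compact_op_rank_one)
  ultimately show ?thesis
    using that by blast
qed

theorem theorem3p1:
  shows "((\<forall>T :: 'e::banach_lattice \<Rightarrow> 'f::banach_lattice.
             positive_op T \<and> dunford_pettis_op T \<longrightarrow> uaw_dunford_pettis_op T)
          \<longleftrightarrow> (\<forall>T :: 'e \<Rightarrow> 'f. positive_op T \<and> compact_op T \<longrightarrow> uaw_dunford_pettis_op T))
       \<and> ((\<forall>T :: 'e \<Rightarrow> 'f. positive_op T \<and> compact_op T \<longrightarrow> uaw_dunford_pettis_op T)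
          \<longleftrightarrow> (dual_order_continuous TYPE('e) \<or> (\<forall>y :: 'f. y = 0)))"
proof -
  let ?DP = "\<forall>T :: 'e \<Rightarrow> 'f. positive_op T \<and> dunford_pettis_op T \<longrightarrow> uaw_dunford_pettis_op T"
  let ?K = "\<forall>T :: 'e \<Rightarrow> 'f. positive_op T \<and> compact_op T \<longrightarrow> uaw_dunford_pettis_op T"
  let ?C = "dual_order_continuous TYPE('e) \<or> (\<forall>y :: 'f. y = 0)"
  have reduce: "uaw_dunford_pettis_op T" if ?C "bounded_linear T"
    "\<And>x. bounded (range x) \<Longrightarrow> weakly_null x \<Longrightarrow> (\<lambda>n. T (x n)) \<longlonglongrightarrow> 0" for T :: "'e \<Rightarrow> 'f"
    using that uaw_dunford_pettis_opI_dual_oc uaw_dunford_pettis_op_trivial_codomain by blast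
  have "?C \<Longrightarrow> ?DP"
    by (auto simp: dunford_pettis_op_def intro: reduce)
  moreover have "?C \<Longrightarrow> ?K"
  proof (intro allI impI)
    fix T :: "'e \<Rightarrow> 'f" assume ?C "positive_op T \<and> compact_op T"
    then show "uaw_dunford_pettis_op T"
      using compact_op_weakly_null[of T] by (intro reduce) (auto simp: compact_op_def)
  qed
  moreover have "\<not> ?DP \<and> \<not> ?K" if not_C: "\<not> ?C"
  proof -
    obtain e :: 'f where "\<not> dual_order_continuous TYPE('e)" "e \<noteq> 0"
      using not_C by blast
    then obtain T :: "'e \<Rightarrow> 'f"
      where "positive_op T" "dunford_pettis_op T" "compact_op T" "\<not> uaw_dunford_pettis_op T"
      by (rule rank_one_not_uaw_dunford_pettis)
    then show ?thesis
      by blast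
  qed
  ultimately show ?thesis
    by argo
qed

end
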